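(* With the two-meter post-selected state $|\Phi_f\rangle=\langle\psi_f|\hat T_{f,2}\,e^{-\imath g\hat A_2\otimes\hat p_2/\hbar}\,\hat T_{2,1}\,e^{-\imath g\hat A_1\otimes\hat p_1/\hbar}\,\hat T_{1,i}\,|\psi_i\rangle|\phi\rangle_1|\phi\rangle_2$, let $\langle x_1k_2\rangle$ be the mean of $x_1k_2$ in the normalized distribution $|\langle x_1,k_2|\Phi_f\rangle|^2$ (meter 1 in position representation, meter 2 in wave-number representation), and $\langle k_1x_2\rangle$ the mean of $k_1x_2$ in the normalized distribution $|\langle k_1,x_2|\Phi_f\rangle|^2$. Then, as $g\to0$, $$\langle x_1k_2\rangle=\frac{g^2}{4\sigma^2}\mathrm{Im}\Big[(A_2,A_1)_w-(A_1)_w\overline{(A_2)_w}\Big]+O(g^3),$$ $$\langle k_1x_2\rangle=\frac{g^2}{4\sigma^2}\mathrm{Im}\Big[(A_2,A_1)_w+(A_1)_w\overline{(A_2)_w}\Big]+O(g^3),$$ and consequently $$\mathrm{Im}\big[(A_2,A_1)_w\big]=\frac{2\sigma^2}{g^2}\Big(\langle x_1k_2\rangle+\langle k_1x_2\rangle\Big)+O(g).$$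
   Context: $\mathcal H$ is a finite-dimensional system Hilbert space with self-adjoint operators $\hat A_1,\hat A_2$; times $t_i<t_1<t_2<t_f$ with unitary system evolutions $\hat T_{b,a}$ satisfying $\hat T_{c,b}\hat T_{b,a}=\hat T_{c,a}$; unit vectors $|\psi_i\rangle,|\psi_f\rangle$ with $\langle\psi_f|\hat T_{f,i}|\psi_i\rangle\neq0$. Weak values: $(A_1)_w=\langle\psi_f|\hat T_{f,1}\hat A_1\hat T_{1,i}|\psi_i\rangle/\langle\psi_f|\hat T_{f,i}|\psi_i\rangle$, $(A_2)_w=\langle\psi_f|\hat T_{f,2}\hat A_2\hat T_{2,i}|\psi_i\rangle/\langle\psi_f|\hat T_{f,i}|\psi_i\rangle$, and the sequential weak value $(A_2,A_1)_w=\langle\psi_f|\hat T_{f,2}\hat A_2\hat T_{2,1}\hat A_1\hat T_{1,i}|\psi_i\rangle/\langle\psi_f|\hat T_{f,i}|\psi_i\rangle$; $\overline{z}$ denotes complex conjugation. Each meter $r=1,2$ is a particle on $\mathbb R$ with position $\hat x_r$, momentum $\hat p_r=\hbar\hat k_r=-\imath\hbar\,\partial/\partial x_r$, initially in the real Gaussian $\phi(x)=(2\pi\sigma^2)^{-1/4}e^{-x^2/(4\sigma^2)}$ ($\sigma>0$), with wave-number representation $\tilde\phi(k)=(2\sigma^2/\pi)^{1/4}e^{-k^2\sigma^2}$; meters have no free Hamiltonian; $g>0$ is the small coupling constant. *)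

theory Defs
  imports "HOL-Analysis.Analysis" "HOL-Library.Landau_Symbols"
begin

definition braket :: "complex ^ 'n \<Rightarrow> complex ^ 'n \<Rightarrow> complex" where
  "braket u v = (\<Sum>j\<in>UNIV. cnj (u $ j) * v $ j)"

definition adjoint_mat :: "complex ^ 'n ^ 'n \<Rightarrow> complex ^ 'n ^ 'n" where
  "adjoint_mat M = (\<chi> i j. cnj (M $ j $ i))"

definition self_adjoint :: "complex ^ 'n ^ 'n \<Rightarrow> bool" where
  "self_adjoint M \<longleftrightarrow> adjoint_mat M = M"

definition unitary_mat :: "complex ^ 'n ^ 'n \<Rightarrow> bool" where
  "unitary_mat U \<longleftrightarrow> adjoint_mat U ** U = mat 1 \<and> U ** adjoint_mat U = mat 1"

definition cscale_mat :: "complex \<Rightarrow> complex ^ 'n ^ 'n \<Rightarrow> complex ^ 'n ^ 'n" where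
  "cscale_mat c M = (\<chi> i j. c * M $ i $ j)"

primrec matpow :: "complex ^ 'n ^ 'n \<Rightarrow> nat \<Rightarrow> complex ^ 'n ^ 'n" where
  "matpow M 0 = mat 1"
| "matpow M (Suc n) = M ** matpow M n"

definition mexp :: "complex ^ 'n ^ 'n \<Rightarrow> complex ^ 'n ^ 'n" where
  "mexp M = (\<Sum>n. (1 / fact n) *\<^sub>R matpow M n)"

text \<open>T b a is the evolution from time a to time b.\<close>

definition weak_value ::
  "(real \<Rightarrow> real \<Rightarrow> complex ^ 'n ^ 'n) \<Rightarrow> real \<Rightarrow> real \<Rightarrow>
   complex ^ 'n \<Rightarrow> complex ^ 'n \<Rightarrow> complex ^ 'n ^ 'n \<Rightarrow> real \<Rightarrow> complex" where
  "weak_value T ti tf psi_i psi_f A t =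
     braket psi_f (T tf t *v (A *v (T t ti *v psi_i))) / braket psi_f (T tf ti *v psi_i)"

definition seq_weak_value ::
  "(real \<Rightarrow> real \<Rightarrow> complex ^ 'n ^ 'n) \<Rightarrow> real \<Rightarrow> real \<Rightarrow> real \<Rightarrow> real \<Rightarrow>
   complex ^ 'n \<Rightarrow> complex ^ 'n \<Rightarrow> complex ^ 'n ^ 'n \<Rightarrow> complex ^ 'n ^ 'n \<Rightarrow> complex" where
  "seq_weak_value T ti t1 t2 tf psi_i psi_f A2 A1 =
     braket psi_f (T tf t2 *v (A2 *v (T t2 t1 *v (A1 *v (T t1 ti *v psi_i)))))
       / braket psi_f (T tf ti *v psi_i)"

text \<open>Wave-number representation of the initial Gaussian meter state.\<close>
definition phi_k :: "real \<Rightarrow> real \<Rightarrow> real" where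
  "phi_k \<sigma> k = (2 * \<sigma>\<^sup>2 / pi) powr (1/4) * exp (- (k\<^sup>2 * \<sigma>\<^sup>2))"

text \<open>The post-selected two-meter state in the wave-number representation of both meters,
  \<langle>k1,k2|\<Phi>_f\<rangle>. Since the momentum operators commute with everything else and the meters have
  no free Hamiltonian, exp(-i g A \<otimes> p/hbar) acts at wave number k as the system operator
  exp(-i g k A).\<close>
definition Phi_kk ::
  "(real \<Rightarrow> real \<Rightarrow> complex ^ 'n ^ 'n) \<Rightarrow> real \<Rightarrow> real \<Rightarrow> real \<Rightarrow> real \<Rightarrow>
   complex ^ 'n \<Rightarrow> complex ^ 'n \<Rightarrow> complex ^ 'n ^ 'n \<Rightarrow> complex ^ 'n ^ 'n \<Rightarrow>
   real \<Rightarrow> real \<Rightarrow> real \<Rightarrow> real \<Rightarrow> complex" where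
  "Phi_kk T ti t1 t2 tf psi_i psi_f A1 A2 \<sigma> g k1 k2 =
     braket psi_f (T tf t2 *v (mexp (cscale_mat (- \<i> * complex_of_real (g * k2)) A2) *v
       (T t2 t1 *v (mexp (cscale_mat (- \<i> * complex_of_real (g * k1)) A1) *v (T t1 ti *v psi_i)))))
     * complex_of_real (phi_k \<sigma> k1) * complex_of_real (phi_k \<sigma> k2)"

text \<open>Mixed representations via \<langle>x|k\<rangle> = exp(i k x)/sqrt(2 pi).\<close>
definition Phi_xk ::
  "(real \<Rightarrow> real \<Rightarrow> complex ^ 'n ^ 'n) \<Rightarrow> real \<Rightarrow> real \<Rightarrow> real \<Rightarrow> real \<Rightarrow>
   complex ^ 'n \<Rightarrow> complex ^ 'n \<Rightarrow> complex ^ 'n ^ 'n \<Rightarrow> complex ^ 'n ^ 'n \<Rightarrow>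
   real \<Rightarrow> real \<Rightarrow> real \<Rightarrow> real \<Rightarrow> complex" where
  "Phi_xk T ti t1 t2 tf psi_i psi_f A1 A2 \<sigma> g x1 k2 =
     (LINT k1|lborel. exp (\<i> * complex_of_real (k1 * x1)) *
        Phi_kk T ti t1 t2 tf psi_i psi_f A1 A2 \<sigma> g k1 k2) / complex_of_real (sqrt (2 * pi))"

definition Phi_kx ::
  "(real \<Rightarrow> real \<Rightarrow> complex ^ 'n ^ 'n) \<Rightarrow> real \<Rightarrow> real \<Rightarrow> real \<Rightarrow> real \<Rightarrow>
   complex ^ 'n \<Rightarrow> complex ^ 'n \<Rightarrow> complex ^ 'n ^ 'n \<Rightarrow> complex ^ 'n ^ 'n \<Rightarrow>
   real \<Rightarrow> real \<Rightarrow> real \<Rightarrow> real \<Rightarrow> complex" where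
  "Phi_kx T ti t1 t2 tf psi_i psi_f A1 A2 \<sigma> g k1 x2 =
     (LINT k2|lborel. exp (\<i> * complex_of_real (k2 * x2)) *
        Phi_kk T ti t1 t2 tf psi_i psi_f A1 A2 \<sigma> g k1 k2) / complex_of_real (sqrt (2 * pi))"

definition mean_prod :: "(real \<Rightarrow> real \<Rightarrow> complex) \<Rightarrow> real" where
  "mean_prod F =
     (LINT z|(lborel :: (real \<times> real) measure). fst z * snd z * (cmod (F (fst z) (snd z)))\<^sup>2)
     / (LINT z|(lborel :: (real \<times> real) measure). (cmod (F (fst z) (snd z)))\<^sup>2)"

end

theory Submission
  imports Defs "HOL-Probability.Probability" "HOL-Real_Asymp.Real_Asymp"
begin

text \<open>Expanding the system in eigenbases \<open>e\<close> of \<open>A\<^sub>1\<close> and \<open>d\<close> of \<open>A\<^sub>2\<close> writes the post-selected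
  two-meter state as a finite superposition over paths \<open>p = (e, d)\<close> with amplitudes \<open>C p\<close>: on
  each path both meters are Gaussians displaced by \<open>g\<close> times the eigenvalues \<open>\<alpha> p\<close>, \<open>\<beta> p\<close>, and
  \<open>\<Sum> C\<close>, \<open>\<Sum> C \<alpha>\<close>, \<open>\<Sum> C \<beta>\<close>, \<open>\<Sum> C \<alpha> \<beta>\<close> are the numerators of the weak values. The mean of
  \<open>x\<^sub>1 k\<^sub>2\<close> is then a ratio of double sums over pairs of paths, weighted by the Gaussian pointer
  overlaps \<open>exp (- g\<^sup>2 w\<^sub>p\<^sub>q)\<close>. Replacing these weights by \<open>1\<close> costs \<open>O(g\<^sup>4)\<close>, and the remaining
  interference sums evaluate to \<open>g\<^sup>2/(4\<sigma>\<^sup>2) Im [(A\<^sub>2,A\<^sub>1)\<^sub>w - (A\<^sub>1)\<^sub>w (A\<^sub>2)\<^sub>w\<^sup>*]\<close>. Exchanging the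
  representations of the two meters exchanges \<open>\<alpha>\<close> and \<open>\<beta>\<close>, which flips the sign of the second
  term, so the sum of both correlations isolates \<open>Im (A\<^sub>2,A\<^sub>1)\<^sub>w\<close>.\<close>

lemma braket_add_right: "braket u (v + w) = braket u v + braket u w"
  by (simp add: braket_def distrib_left sum.distrib)

lemma braket_zero_right [simp]: "braket u 0 = 0"
  by (simp add: braket_def)

lemma braket_add_left: "braket (u + v) w = braket u w + braket v w"
  by (simp add: braket_def distrib_right sum.distrib)

lemma braket_diff_right: "braket u (v - w) = braket u v - braket u w"
  by (simp add: braket_def right_diff_distrib sum_subtractf)

lemma braket_smult_right: "braket u (c *s v) = c * braket u v"
  by (simp add: braket_def sum_distrib_left algebra_simps)

lemma braket_smult_left: "braket (c *s u) v = cnj c * braket u v"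
  by (simp add: braket_def sum_distrib_left algebra_simps)

lemma braket_sum_right: "braket u (\<Sum>x\<in>S. f x) = (\<Sum>x\<in>S. braket u (f x))"
  by (simp add: braket_def sum_component sum_distrib_left sum.swap[of _ S])

lemma cnj_braket: "cnj (braket u v) = braket v u"
  by (simp add: braket_def mult.commute)

lemma braket_self: "braket v v = complex_of_real ((norm v)\<^sup>2)"
proof -
  have "(norm v)\<^sup>2 = (\<Sum>i\<in>UNIV. (cmod (v $ i))\<^sup>2)"
    by (simp add: norm_vec_def L2_set_def sum_nonneg)
  then have "complex_of_real ((norm v)\<^sup>2) = (\<Sum>i\<in>UNIV. complex_of_real ((cmod (v $ i))\<^sup>2))"
    by simp
  also have "\<dots> = braket v v"
    unfolding braket_def complex_norm_square by (simp add: mult.commute)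
  finally show ?thesis by simp
qed

lemma Re_braket_eq_inner: "Re (braket x y) = x \<bullet> y"
  by (simp add: inner_vec_def braket_def inner_complex_def Re_sum)

lemma scaleR_eq_smult: "r *\<^sub>R (v::complex^'n) = complex_of_real r *s v"
  by (simp add: vec_eq_iff scaleR_conv_of_real[where 'a=complex])

lemma matrix_vector_mult_smult: "(A::complex^'n^'m) *v (c *s v) = c *s (A *v v)"
  by (simp add: vec_eq_iff matrix_vector_mult_def sum_distrib_left mult.left_commute)

lemma matrix_vector_mult_sum: "A *v (\<Sum>x\<in>S. f x) = (\<Sum>x\<in>S. A *v f x)"
  by (induct S rule: infinite_finite_induct) (auto simp: matrix_vector_right_distrib)

lemma braket_self_adjoint:
  assumes "self_adjoint A"
  shows "braket u (A *v v) = braket (A *v u) v"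
proof -
  have A: "A $ i $ j = cnj (A $ j $ i)" for i j
    using assms unfolding self_adjoint_def adjoint_mat_def by (metis vec_lambda_beta)
  have "braket u (A *v v) = (\<Sum>i\<in>UNIV. \<Sum>j\<in>UNIV. cnj (u $ i) * A $ i $ j * v $ j)"
    by (simp add: braket_def matrix_vector_mult_def sum_distrib_left mult.assoc)
  also have "\<dots> = (\<Sum>j\<in>UNIV. \<Sum>i\<in>UNIV. cnj (u $ i) * A $ i $ j * v $ j)"
    by (rule sum.swap)
  also have "\<dots> = (\<Sum>j\<in>UNIV. \<Sum>i\<in>UNIV. cnj (A $ j $ i * u $ i) * v $ j)"
    by (intro sum.cong refl, subst A) (simp add: mult.commute)
  also have "\<dots> = braket (A *v u) v"
    by (simp add: braket_def matrix_vector_mult_def sum_distrib_right cnj_sum)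
  finally show ?thesis .
qed

section \<open>The spectral theorem for self-adjoint matrices\<close>

lemma nonpos_if_le_all_pos_multiples:
  fixes x M :: real
  assumes "\<And>t. t > 0 \<Longrightarrow> x \<le> t * M"
  shows "x \<le> 0"
proof (rule ccontr)
  assume "\<not> x \<le> 0"
  then have "x > 0" by simp
  define t where "t = x / (2 * (\<bar>M\<bar> + 1))"
  have "t > 0" using \<open>x > 0\<close> by (simp add: t_def add_pos_nonneg)
  have "t * M \<le> t * \<bar>M\<bar>" using \<open>t > 0\<close> by (intro mult_left_mono) auto
  also have "\<dots> < x" using \<open>x > 0\<close> by (simp add: t_def field_simps add_nonneg_pos)
  finally show False using assms[OF \<open>t > 0\<close>] by linarith
qed

lemma quadratic_form_along_orthogonal_line:
  fixes A :: "complex^'n^'n" and v w :: "complex^'n" and c :: complex and t :: real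
  assumes sa: "self_adjoint A" and v: "braket v v = 1"
    and w: "A *v v = w + c *s v" "braket v w = 0"
  defines "u \<equiv> v + complex_of_real t *s w"
  shows "(norm u)\<^sup>2 = 1 + t\<^sup>2 * (norm w)\<^sup>2"
    "Re (braket u (A *v u)) = Re (braket v (A *v v)) + 2 * t * (norm w)\<^sup>2 + t\<^sup>2 * Re (braket w (A *v w))"
proof -
  have wv: "braket w v = 0" using w(2) cnj_braket[of v w] by simp
  have "braket u u = 1 + complex_of_real (t\<^sup>2 * (norm w)\<^sup>2)"
    using v w(2) wv braket_self[of w]
    by (simp add: u_def braket_add_right braket_add_left braket_smult_right braket_smult_left
        power2_eq_square)
  then show "(norm u)\<^sup>2 = 1 + t\<^sup>2 * (norm w)\<^sup>2"
    by (metis braket_self of_real_1 of_real_add of_real_eq_iff)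
  have "braket w (A *v v) = (norm w)\<^sup>2" and "braket v (A *v w) = (norm w)\<^sup>2"
    by (simp_all add: w(1) braket_self_adjoint[OF sa, of v] braket_add_right braket_add_left
        braket_smult_right braket_smult_left braket_self wv flip: cnj_braket[of v w] w(2))
  then show "Re (braket u (A *v u)) =
      Re (braket v (A *v v)) + 2 * t * (norm w)\<^sup>2 + t\<^sup>2 * Re (braket w (A *v w))"
    by (simp add: u_def matrix_vector_right_distrib matrix_vector_mult_smult braket_add_right
        braket_add_left braket_smult_right braket_smult_left power2_eq_square algebra_simps)
qed

lemma rayleigh_maximiser_is_eigenvector:
  fixes A :: "complex^'n^'n"
  assumes sa: "self_adjoint A" and S: "vec.subspace S" and AS: "\<And>x. x \<in> S \<Longrightarrow> A *v x \<in> S"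
    and v: "v \<in> S" "norm v = 1"
    and max: "\<And>u. u \<in> S \<Longrightarrow> norm u = 1 \<Longrightarrow> Re (braket u (A *v u)) \<le> Re (braket v (A *v v))"
  shows "A *v v = braket v (A *v v) *s v"
proof -
  define f where "f u = Re (braket u (A *v u))" for u
  define c where "c = braket v (A *v v)"
  define w where "w = A *v v - c *s v"
  have vv: "braket v v = 1" using v by (simp add: braket_self)
  have Av: "A *v v = w + c *s v" by (simp add: w_def)
  have vw: "braket v w = 0"
    by (simp add: w_def braket_diff_right braket_smult_right vv c_def)
  have wS: "w \<in> S" unfolding w_def using S v AS by (intro vec.subspace_diff vec.subspace_scale)
  txt \<open>Moving from \<open>v\<close> in the direction \<open>w\<close> increases the Rayleigh quotient to first order
    unless \<open>w = 0\<close>.\<close>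
  have "2 * (norm w)\<^sup>2 \<le> t * (f v * (norm w)\<^sup>2 - f w)" if t: "t > 0" for t
  proof -
    define u where "u = v + complex_of_real t *s w"
    note line = quadratic_form_along_orthogonal_line[OF sa vv Av vw, of t, folded u_def f_def]
    have "1 \<le> (norm u)\<^sup>2" unfolding line(1) by simp
    then have nu: "norm u > 0" by (cases "norm u = 0") auto
    have "(1 / norm u) *\<^sub>R u \<in> S"
      unfolding u_def scaleR_eq_smult using S v wS
      by (intro vec.subspace_scale vec.subspace_add) auto
    then have "f ((1 / norm u) *\<^sub>R u) \<le> f v"
      using nu max unfolding f_def by simp
    moreover have "f ((1 / norm u) *\<^sub>R u) = f u / (norm u)\<^sup>2"
      by (simp add: f_def scaleR_eq_smult matrix_vector_mult_smult braket_smult_right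
          braket_smult_left power2_eq_square)
    ultimately have "f u \<le> f v * (norm u)\<^sup>2"
      using nu by (simp add: pos_divide_le_eq)
    then have "t * (2 * (norm w)\<^sup>2) \<le> t * (t * (f v * (norm w)\<^sup>2 - f w))"
      unfolding line by (simp add: algebra_simps power2_eq_square)
    with t show ?thesis by simp
  qed
  then have "(norm w)\<^sup>2 \<le> 0"
    using nonpos_if_le_all_pos_multiples[of "2 * (norm w)\<^sup>2"] by auto
  then have "w = 0" by simp
  then show ?thesis using Av unfolding c_def by simp
qed

definition orthonormal_eigenvectors :: "complex^'n^'n \<Rightarrow> (complex^'n) set \<Rightarrow> bool" where
  "orthonormal_eigenvectors A E \<longleftrightarrow> finite E \<and> (\<forall>e\<in>E. braket e e = 1)
     \<and> (\<forall>e\<in>E. \<forall>d\<in>E. e \<noteq> d \<longrightarrow> braket e d = 0)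
     \<and> (\<forall>e\<in>E. \<exists>l::real. A *v e = complex_of_real l *s e)"

lemma orthonormal_eigenvectors_card:
  assumes "orthonormal_eigenvectors (A::complex^'n^'n) E"
  shows "card E \<le> DIM(complex^'n)"
proof -
  have "pairwise orthogonal E"
    using assms by (simp add: orthonormal_eigenvectors_def pairwise_def orthogonal_def
        Re_braket_eq_inner[symmetric])
  moreover have "0 \<notin> E"
    using assms by (force simp: orthonormal_eigenvectors_def)
  ultimately have "independent E" by (rule pairwise_orthogonal_independent)
  from independent_bound[OF this] show ?thesis by (rule conjunct2)
qed

lemma exists_rayleigh_maximiser:
  fixes A :: "complex^'n^'n"
  assumes S: "vec.subspace S" "closed S" and r: "r \<in> S" "r \<noteq> 0"
  obtains v where "v \<in> S" "norm v = 1"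
    "\<And>u. u \<in> S \<Longrightarrow> norm u = 1 \<Longrightarrow> Re (braket u (A *v u)) \<le> Re (braket v (A *v v))"
proof -
  have "(1 / norm r) *\<^sub>R r \<in> S"
    unfolding scaleR_eq_smult using S r by (simp add: vec.subspace_scale)
  then have "(1 / norm r) *\<^sub>R r \<in> S \<inter> sphere 0 1"
    using r by simp
  moreover have "compact (S \<inter> sphere 0 1)"
    using S by (intro closed_Int_compact) auto
  moreover have "continuous_on (S \<inter> sphere 0 1) (\<lambda>u. Re (braket u (A *v u)))"
    unfolding braket_def matrix_vector_mult_def by (intro continuous_intros)
  ultimately obtain v where "v \<in> S \<inter> sphere 0 1"
    and "\<forall>u\<in>S \<inter> sphere 0 1. Re (braket u (A *v u)) \<le> Re (braket v (A *v v))"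
    using continuous_attains_sup[of "S \<inter> sphere 0 1"] by blast
  then show thesis using that by auto
qed

lemma self_adjoint_orthogonal_complement_invariant:
  assumes sa: "self_adjoint A" and E: "orthonormal_eigenvectors A E"
    and x: "\<forall>e\<in>E. braket e x = 0"
  shows "\<forall>e\<in>E. braket e (A *v x) = 0"
proof
  fix e assume "e \<in> E"
  then obtain l :: real where "A *v e = complex_of_real l *s e"
    using E unfolding orthonormal_eigenvectors_def by blast
  then show "braket e (A *v x) = 0"
    using x \<open>e \<in> E\<close> by (simp add: braket_self_adjoint[OF sa] braket_smult_left)
qed

lemma orthonormal_eigenvectors_extend:
  assumes sa: "self_adjoint A" and E: "orthonormal_eigenvectors A E"
    and r: "r \<noteq> 0" "\<forall>e\<in>E. braket e r = 0"
  shows "\<exists>v. v \<notin> E \<and> orthonormal_eigenvectors A (insert v E)"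
proof -
  define S where "S = {v. \<forall>e\<in>E. braket e v = 0}"
  have S: "vec.subspace S"
    by (auto simp: vec.subspace_def S_def braket_add_right braket_smult_right)
  have "closed {v. braket e v = 0}" for e
    unfolding braket_def by (intro closed_Collect_eq continuous_intros)
  then have "closed S"
    unfolding S_def Collect_ball_eq by (intro closed_INT) auto
  then obtain v where v: "v \<in> S" "norm v = 1"
    and max: "\<And>u. u \<in> S \<Longrightarrow> norm u = 1 \<Longrightarrow> Re (braket u (A *v u)) \<le> Re (braket v (A *v v))"
    using exists_rayleigh_maximiser[OF S _ _ r(1), of A] r(2) by (auto simp: S_def)
  have "A *v x \<in> S" if "x \<in> S" for x
    using self_adjoint_orthogonal_complement_invariant[OF sa E] that by (simp add: S_def)
  from rayleigh_maximiser_is_eigenvector[OF sa S this v max]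
  have "A *v v = braket v (A *v v) *s v" .
  moreover have "cnj (braket v (A *v v)) = braket v (A *v v)"
    by (simp add: cnj_braket braket_self_adjoint[OF sa])
  then have "complex_of_real (Re (braket v (A *v v))) = braket v (A *v v)"
    by (simp add: complex_eq_iff)
  ultimately have "A *v v = complex_of_real (Re (braket v (A *v v))) *s v"
    by simp
  moreover have "braket v e = 0" "braket e v = 0" if "e \<in> E" for e
    using v that cnj_braket[of e v] by (simp_all add: S_def)
  moreover have "braket v v = 1" "v \<notin> E"
    using v by (auto simp: braket_self S_def)
  ultimately have "orthonormal_eigenvectors A (insert v E)"
    using E by (auto simp: orthonormal_eigenvectors_def)
  with \<open>v \<notin> E\<close> show ?thesis by blast
qed

theorem self_adjoint_spectral:
  assumes sa: "self_adjoint (A :: complex^'n^'n)"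
  obtains E :: "(complex^'n) set" and lam :: "complex^'n \<Rightarrow> real"
  where "finite E" "\<And>v. v = (\<Sum>e\<in>E. braket e v *s e)"
    "\<And>e. e \<in> E \<Longrightarrow> A *v e = complex_of_real (lam e) *s e"
proof -
  have "orthonormal_eigenvectors A {}" by (simp add: orthonormal_eigenvectors_def)
  then obtain E where E: "orthonormal_eigenvectors A E"
    and Emax: "\<And>E'. orthonormal_eigenvectors A E' \<Longrightarrow> card E' \<le> card E"
    using ex_has_greatest_nat[of "orthonormal_eigenvectors A" "{}" card "Suc DIM(complex^'n)"]
      orthonormal_eigenvectors_card le_imp_less_Suc by blast
  have fin: "finite E" using E by (simp add: orthonormal_eigenvectors_def)
  txt \<open>By maximality, the residual of the expansion of \<open>v\<close> along \<open>E\<close> vanishes.\<close>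
  have "v = (\<Sum>e\<in>E. braket e v *s e)" for v
  proof (rule ccontr)
    define r where "r = v - (\<Sum>e\<in>E. braket e v *s e)"
    assume "v \<noteq> (\<Sum>e\<in>E. braket e v *s e)"
    then have "r \<noteq> 0" by (simp add: r_def)
    moreover have "braket d r = 0" if d: "d \<in> E" for d
    proof -
      have "(\<Sum>e\<in>E - {d}. braket e v * braket d e) = 0"
        by (rule sum.neutral) (use E d in \<open>auto simp: orthonormal_eigenvectors_def\<close>)
      then have "(\<Sum>e\<in>E. braket e v * braket d e) = braket d v * braket d d"
        by (simp add: sum.remove[OF fin d])
      then show ?thesis
        using E d by (simp add: r_def braket_diff_right braket_sum_right braket_smult_right
            orthonormal_eigenvectors_def)
    qed
    ultimately obtain w where "w \<notin> E" "orthonormal_eigenvectors A (insert w E)"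
      using orthonormal_eigenvectors_extend[OF sa E] by blast
    then show False using Emax[of "insert w E"] fin by simp
  qed
  moreover obtain lam where "\<And>e. e \<in> E \<Longrightarrow> A *v e = complex_of_real (lam e) *s e"
    using E unfolding orthonormal_eigenvectors_def by metis
  ultimately show thesis using that fin by blast
qed

lemma matpow_eigenvector:
  assumes "(A::complex^'n^'n) *v e = c *s e"
  shows "matpow A n *v e = c ^ n *s e"
proof (induct n)
  case (Suc n)
  have "matpow A (Suc n) *v e = A *v (matpow A n *v e)"
    by (simp add: matrix_vector_mul_assoc)
  with Suc assms show ?case
    by (simp add: matrix_vector_mult_smult vector_smult_assoc mult.commute)
qed simp

lemma vec_sums_entrywise:
  fixes f :: "nat \<Rightarrow> 'a::real_normed_vector^'n^'m"
  assumes "\<And>i j. (\<lambda>n. f n $ i $ j) sums (s $ i $ j)"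
  shows "f sums s"
  unfolding sums_def
proof (intro vec_tendstoI)
  fix i j
  show "((\<lambda>N. (\<Sum>n<N. f n) $ i $ j) \<longlongrightarrow> s $ i $ j) sequentially"
    using assms[of i j] by (simp add: sums_def sum_component)
qed

lemma matpow_eigen_expansion:
  fixes M :: "complex^'n^'n"
  assumes dec: "\<And>v. v = (\<Sum>e\<in>E. braket e v *s e)"
    and eig: "\<And>e. e \<in> E \<Longrightarrow> M *v e = z e *s e"
  shows "matpow M n $ i $ j = (\<Sum>e\<in>E. cnj (e $ j) * e $ i * z e ^ n)"
proof -
  have "matpow M n $ i $ j = (matpow M n *v axis j 1) $ i"
    by (simp add: matrix_vector_mult_def axis_def if_distrib cong: if_cong)
  also have "matpow M n *v axis j 1 = (\<Sum>e\<in>E. (cnj (e $ j) * z e ^ n) *s e)"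
    by (subst dec) (simp add: matrix_vector_mult_sum matrix_vector_mult_smult matpow_eigenvector[OF eig]
        vector_smult_assoc braket_def axis_def if_distrib cong: if_cong)
  finally show ?thesis by (simp add: sum_component mult.commute mult.left_commute)
qed

lemma mexp_eigen_expansion:
  fixes M :: "complex^'n^'n"
  assumes dec: "\<And>v. v = (\<Sum>e\<in>E. braket e v *s e)"
    and eig: "\<And>e. e \<in> E \<Longrightarrow> M *v e = z e *s e"
  shows "mexp M = (\<chi> i j. \<Sum>e\<in>E. cnj (e $ j) * e $ i * exp (z e))"
proof -
  have "(\<lambda>n. (1 / fact n) *\<^sub>R matpow M n) sums (\<chi> i j. \<Sum>e\<in>E. cnj (e $ j) * e $ i * exp (z e))"
  proof (rule vec_sums_entrywise)
    fix i j
    have "(\<lambda>n. \<Sum>e\<in>E. cnj (e $ j) * e $ i * (z e ^ n /\<^sub>R fact n)) sums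
        (\<Sum>e\<in>E. cnj (e $ j) * e $ i * exp (z e))"
      by (intro sums_sum sums_mult exp_converges)
    then show "(\<lambda>n. ((1 / fact n) *\<^sub>R matpow M n) $ i $ j) sums
        (\<chi> i j. \<Sum>e\<in>E. cnj (e $ j) * e $ i * exp (z e)) $ i $ j"
      by (simp add: matpow_eigen_expansion[OF dec eig] scaleR_sum_right
          scaleR_conv_of_real[where 'a=complex] sum_divide_distrib field_simps)
  qed
  then show ?thesis unfolding mexp_def by (rule sums_unique[symmetric])
qed

lemma mult_vector_eigen_expansion:
  fixes A :: "complex^'n^'n"
  assumes dec: "\<And>v. v = (\<Sum>e\<in>E. braket e v *s e)"
    and eig: "\<And>e. e \<in> E \<Longrightarrow> A *v e = complex_of_real (lam e) *s e"
  shows "A *v v = (\<Sum>e\<in>E. (complex_of_real (lam e) * braket e v) *s e)"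
  by (subst dec) (simp add: matrix_vector_mult_sum matrix_vector_mult_smult eig vector_smult_assoc
      mult.commute)

lemma mexp_mult_vector_eigen_expansion:
  fixes A :: "complex^'n^'n"
  assumes dec: "\<And>v. v = (\<Sum>e\<in>E. braket e v *s e)"
    and eig: "\<And>e. e \<in> E \<Longrightarrow> A *v e = complex_of_real (lam e) *s e"
  shows "mexp (cscale_mat c A) *v v = (\<Sum>e\<in>E. (exp (c * lam e) * braket e v) *s e)"
proof -
  have "cscale_mat c A *v v = c *s (A *v v)" for v
    by (simp add: vec_eq_iff matrix_vector_mult_def cscale_mat_def sum_distrib_left mult.assoc)
  then have "cscale_mat c A *v e = (c * lam e) *s e" if "e \<in> E" for e
    using eig[OF that] by (simp add: vector_smult_assoc)
  then have "mexp (cscale_mat c A) = (\<chi> i j. \<Sum>e\<in>E. cnj (e $ j) * e $ i * exp (c * lam e))"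
    by (rule mexp_eigen_expansion[OF dec])
  then show ?thesis
    by (simp add: vec_eq_iff matrix_vector_mult_def sum_component braket_def sum_distrib_left
        sum_distrib_right mult.commute mult.left_commute sum.swap[of _ UNIV E])
qed

section \<open>Expansion of the post-selected amplitude\<close>

text \<open>Inserting the eigenbases \<open>e\<close> of \<open>A\<^sub>1\<close> and \<open>d\<close> of \<open>A\<^sub>2\<close> between the evolutions turns
  every amplitude into a sum over the paths \<open>(e, d)\<close>.\<close>

definition path_amplitude ::
  "complex^'n \<Rightarrow> complex^'n \<Rightarrow> complex^'n^'n \<Rightarrow> complex^'n^'n \<Rightarrow> complex^'n^'n \<Rightarrow>
    (complex^'n) \<times> (complex^'n) \<Rightarrow> complex" where
  "path_amplitude psi_i psi_f U V W p =
     braket (fst p) (U *v psi_i) * braket (snd p) (V *v fst p) * braket psi_f (W *v snd p)"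

lemma braket_diagonal_sandwich:
  fixes U V W M1 M2 :: "complex^'n^'n"
  assumes M1: "\<And>x. M1 *v x = (\<Sum>e\<in>E1. (b1 e * braket e x) *s e)"
    and M2: "\<And>x. M2 *v x = (\<Sum>d\<in>E2. (b2 d * braket d x) *s d)"
  shows "braket psi_f (W *v (M2 *v (V *v (M1 *v (U *v psi_i))))) =
    (\<Sum>p\<in>E1 \<times> E2. path_amplitude psi_i psi_f U V W p * b1 (fst p) * b2 (snd p))"
proof -
  have "braket psi_f (W *v (M2 *v (V *v (M1 *v (U *v psi_i))))) =
     (\<Sum>e\<in>E1. \<Sum>d\<in>E2. path_amplitude psi_i psi_f U V W (e, d) * b1 e * b2 d)"
    by (simp add: M1 M2 matrix_vector_mult_sum matrix_vector_mult_smult braket_sum_right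
        braket_smult_right sum_distrib_left sum_distrib_right path_amplitude_def mult_ac)
  also have "\<dots> = (\<Sum>p\<in>E1 \<times> E2. path_amplitude psi_i psi_f U V W p * b1 (fst p) * b2 (snd p))"
    by (simp add: sum.cartesian_product case_prod_beta)
  finally show ?thesis .
qed

text \<open>On an eigenvector of eigenvalue \<open>a\<close>, the coupling \<open>exp (-i g A \<otimes> p/\<hbar>)\<close> multiplies the meter
  wave function in the wave-number representation by \<open>exp (-i g k a)\<close>.\<close>

definition meter_k :: "real \<Rightarrow> real \<Rightarrow> real \<Rightarrow> real \<Rightarrow> complex" where
  "meter_k \<sigma> g a k =
     exp ((- \<i> * complex_of_real (g * k)) * complex_of_real a) * complex_of_real (phi_k \<sigma> k)"

lemma post_selected_path_sums:
  fixes T :: "real \<Rightarrow> real \<Rightarrow> complex ^ 'n ^ 'n" and A1 A2 :: "complex ^ 'n ^ 'n"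
  assumes times: "ti < t1" "t1 < t2" "t2 < tf"
    and compose: "\<And>a b c. a \<le> b \<Longrightarrow> b \<le> c \<Longrightarrow> T c b ** T b a = T c a"
    and sa1: "self_adjoint A1" and sa2: "self_adjoint A2"
  obtains I :: "((complex^'n) \<times> (complex^'n)) set" and C :: "(complex^'n) \<times> (complex^'n) \<Rightarrow> complex"
    and \<alpha> \<beta> :: "(complex^'n) \<times> (complex^'n) \<Rightarrow> real"
  where "finite I"
    "braket psi_f (T tf ti *v psi_i) = (\<Sum>p\<in>I. C p)"
    "braket psi_f (T tf t1 *v (A1 *v (T t1 ti *v psi_i))) = (\<Sum>p\<in>I. C p * \<alpha> p)"
    "braket psi_f (T tf t2 *v (A2 *v (T t2 ti *v psi_i))) = (\<Sum>p\<in>I. C p * \<beta> p)"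
    "braket psi_f (T tf t2 *v (A2 *v (T t2 t1 *v (A1 *v (T t1 ti *v psi_i))))) =
       (\<Sum>p\<in>I. C p * \<alpha> p * \<beta> p)"
    "\<And>g k1 k2. Phi_kk T ti t1 t2 tf psi_i psi_f A1 A2 \<sigma> g k1 k2 =
       (\<Sum>p\<in>I. C p * meter_k \<sigma> g (\<alpha> p) k1 * meter_k \<sigma> g (\<beta> p) k2)"
proof -
  obtain E1 lam1 where fin1: "finite E1" and dec1: "\<And>v. v = (\<Sum>e\<in>E1. braket e v *s e)"
    and eig1: "\<And>e. e \<in> E1 \<Longrightarrow> A1 *v e = complex_of_real (lam1 e) *s e"
    using self_adjoint_spectral[OF sa1] by blast
  obtain E2 lam2 where fin2: "finite E2" and dec2: "\<And>v. v = (\<Sum>e\<in>E2. braket e v *s e)"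
    and eig2: "\<And>e. e \<in> E2 \<Longrightarrow> A2 *v e = complex_of_real (lam2 e) *s e"
    using self_adjoint_spectral[OF sa2] by blast
  define C where "C = path_amplitude psi_i psi_f (T t1 ti) (T t2 t1) (T tf t2)"
  define \<alpha> where "\<alpha> p = lam1 (fst p)" for p :: "(complex^'n) \<times> (complex^'n)"
  define \<beta> where "\<beta> p = lam2 (snd p)" for p :: "(complex^'n) \<times> (complex^'n)"
  have one1: "mat 1 *v x = (\<Sum>e\<in>E1. (1 * braket e x) *s e)"
    and one2: "mat 1 *v x = (\<Sum>e\<in>E2. (1 * braket e x) *s e)" for x
    by (simp_all flip: dec1 dec2)
  note mult1 = mult_vector_eigen_expansion[OF dec1 eig1]
    and mult2 = mult_vector_eigen_expansion[OF dec2 eig2]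
    and exp1 = mexp_mult_vector_eigen_expansion[OF dec1 eig1]
    and exp2 = mexp_mult_vector_eigen_expansion[OF dec2 eig2]
  note path_sum = braket_diagonal_sandwich[where psi_i = psi_i and psi_f = psi_f
      and U = "T t1 ti" and V = "T t2 t1" and W = "T tf t2", folded C_def]
  have T2i: "T t2 ti = T t2 t1 ** T t1 ti" and Tf1: "T tf t1 = T tf t2 ** T t2 t1"
    and Tfi: "T tf ti = T tf t2 ** (T t2 t1 ** T t1 ti)"
    using compose times by (metis less_imp_le order.trans)+
  show thesis
  proof
    show "finite (E1 \<times> E2)" using fin1 fin2 by simp
    show "braket psi_f (T tf ti *v psi_i) = (\<Sum>p\<in>E1 \<times> E2. C p)"
      using path_sum[OF one1 one2] by (simp add: Tfi matrix_vector_mul_assoc)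
    show "braket psi_f (T tf t1 *v (A1 *v (T t1 ti *v psi_i))) = (\<Sum>p\<in>E1 \<times> E2. C p * \<alpha> p)"
      using path_sum[OF mult1 one2] by (simp add: Tf1 \<alpha>_def matrix_vector_mul_assoc matrix_mul_assoc)
    show "braket psi_f (T tf t2 *v (A2 *v (T t2 ti *v psi_i))) = (\<Sum>p\<in>E1 \<times> E2. C p * \<beta> p)"
      using path_sum[OF one1 mult2] by (simp add: T2i \<beta>_def matrix_vector_mul_assoc)
    show "braket psi_f (T tf t2 *v (A2 *v (T t2 t1 *v (A1 *v (T t1 ti *v psi_i))))) =
       (\<Sum>p\<in>E1 \<times> E2. C p * \<alpha> p * \<beta> p)"
      using path_sum[OF mult1 mult2] by (simp add: \<alpha>_def \<beta>_def)
    show "Phi_kk T ti t1 t2 tf psi_i psi_f A1 A2 \<sigma> g k1 k2 =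
       (\<Sum>p\<in>E1 \<times> E2. C p * meter_k \<sigma> g (\<alpha> p) k1 * meter_k \<sigma> g (\<beta> p) k2)" for g k1 k2
      using path_sum[OF exp1 exp2]
      by (simp add: Phi_kk_def meter_k_def \<alpha>_def \<beta>_def sum_distrib_left mult_ac)
  qed
qed

section \<open>Gaussian integrals\<close>

lemma integrable_normal_density_iexp:
  assumes "s > 0"
  shows "integrable lborel (\<lambda>k. complex_of_real (normal_density 0 s k) * iexp (k * D))"
proof (rule Bochner_Integration.integrable_bound)
  show "integrable lborel (\<lambda>k. normal_density 0 s k)"
    using assms by simp
  show "(\<lambda>k. complex_of_real (normal_density 0 s k) * iexp (k * D)) \<in> borel_measurable lborel"
    by measurable
qed (simp add: norm_mult)

lemma integrable_moment_normal_density_iexp: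
  assumes "s > 0"
  shows "integrable lborel (\<lambda>k. complex_of_real k * (complex_of_real (normal_density 0 s k) * iexp (k * D)))"
proof (rule Bochner_Integration.integrable_bound)
  show "integrable lborel (\<lambda>k. normal_density 0 s k * \<bar>k - 0\<bar> ^ 1)"
    using integrable_normal_moment_abs[OF assms, of 0 1] .
  show "(\<lambda>k. complex_of_real k * (complex_of_real (normal_density 0 s k) * iexp (k * D)))
      \<in> borel_measurable lborel"
    by measurable
qed (simp add: norm_mult)

lemma integral_normal_density_iexp:
  assumes s: "s > 0"
  shows "(LINT k|lborel. complex_of_real (normal_density 0 s k) * iexp (k * D)) =
    complex_of_real (exp (- (s\<^sup>2 * D\<^sup>2) / 2))"
proof -
  have std_scaled: "normal_density 0 s (s * x) = std_normal_density x / s" for x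
    using s by (simp add: normal_density_def real_sqrt_mult power_mult_distrib)
  have "(LINT k|lborel. complex_of_real (normal_density 0 s k) * iexp (k * D)) =
     \<bar>s\<bar> *\<^sub>R (LINT x|lborel. complex_of_real (normal_density 0 s (0 + s * x)) * iexp ((0 + s * x) * D))"
    using s by (intro lborel_integral_real_affine) simp
  also have "\<dots> = \<bar>s\<bar> *\<^sub>R (LINT x|lborel. complex_of_real (1 / s) *
      (complex_of_real (std_normal_density x) * iexp (x * (s * D))))"
    by (simp only: add_0_left std_scaled) (simp add: mult_ac)
  also have "\<dots> = (LINT x|lborel. complex_of_real (std_normal_density x) * iexp (x * (s * D)))"
    using s by (simp add: scaleR_conv_of_real)
  also have "\<dots> = char std_normal_distribution (s * D)"
    by (simp add: char_def integral_density scaleR_conv_of_real mult.commute)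
  finally show ?thesis
    by (simp add: char_std_normal_distribution power_mult_distrib)
qed

lemma has_vector_derivative_iexp_linear:
  "((\<lambda>k. iexp (k * D)) has_vector_derivative (\<i> * D * iexp (k * D))) (at k)"
proof -
  have "((\<lambda>k. k * D) has_vector_derivative D) (at k)"
    unfolding has_real_derivative_iff_has_vector_derivative[symmetric]
    by (auto intro!: derivative_eq_intros)
  from vector_diff_chain_at[OF this has_vector_derivative_iexp]
  have "((\<lambda>k. iexp (k * D)) has_vector_derivative (D *\<^sub>R (\<i> * iexp (k * D)))) (at k)"
    by (simp add: o_def)
  then show ?thesis by (simp add: scaleR_conv_of_real mult_ac)
qed

lemma lborel_integral_derivative_eq_0:
  fixes F f :: "real \<Rightarrow> 'a::euclidean_space"
  assumes F: "\<And>x. (F has_vector_derivative f x) (at x)" and f: "\<And>x. isCont f x"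
    and int: "integrable lborel f" and lim: "(F \<longlongrightarrow> 0) at_top" "(F \<longlongrightarrow> 0) at_bot"
  shows "(LINT x|lborel. f x) = 0"
proof -
  have "(LBINT x=-\<infinity>..\<infinity>. f x) = 0 - 0"
  proof (rule interval_integral_FTC_integrable[where F = F])
    show "set_integrable lborel (einterval (- \<infinity>) \<infinity>) f"
      unfolding set_integrable_def einterval_eq_UNIV using int by simp
    show "((F \<circ> real_of_ereal) \<longlongrightarrow> 0) (at_right (- \<infinity>))"
      unfolding ereal_tendsto_simps using lim(2) .
    show "((F \<circ> real_of_ereal) \<longlongrightarrow> 0) (at_left \<infinity>)"
      unfolding ereal_tendsto_simps using lim(1) .
  qed (auto intro: F f)
  then show ?thesis
    by (simp add: interval_lebesgue_integral_def einterval_eq_UNIV set_lebesgue_integral_def)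
qed

text \<open>The first moment follows by integrating the derivative of the integrand:
  \<open>(\<phi>(k) e\<^sup>i\<^sup>k\<^sup>D)' = (i D - k/s\<^sup>2) \<phi>(k) e\<^sup>i\<^sup>k\<^sup>D\<close>.\<close>

lemma integral_moment_normal_density_iexp:
  assumes s: "s > 0"
  shows "(LINT k|lborel. complex_of_real k * (complex_of_real (normal_density 0 s k) * iexp (k * D))) =
    \<i> * complex_of_real (D * s\<^sup>2 * exp (- (s\<^sup>2 * D\<^sup>2) / 2))"
proof -
  define F where "F k = complex_of_real (normal_density 0 s k) * iexp (k * D)" for k
  define F' where "F' k = \<i> * D * F k - complex_of_real (1 / s\<^sup>2) * (k * F k)" for k
  have intF: "integrable lborel F" and intkF: "integrable lborel (\<lambda>k. complex_of_real k * F k)"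
    unfolding F_def using integrable_normal_density_iexp[OF s] integrable_moment_normal_density_iexp[OF s] .
  have nd_deriv: "((\<lambda>k. complex_of_real (normal_density 0 s k)) has_vector_derivative
      complex_of_real (normal_density 0 s k * (- k / s\<^sup>2))) (at k)" for k
    using s unfolding normal_density_def
    by (intro has_vector_derivative_of_real) (auto intro!: derivative_eq_intros simp: field_simps power2_eq_square)
  have "(F has_vector_derivative F' k) (at k)" for k
    unfolding F_def F'_def
    using has_vector_derivative_mult[OF nd_deriv has_vector_derivative_iexp_linear]
    by (rule has_vector_derivative_eq_rhs) (use s in \<open>simp add: field_simps\<close>)
  moreover have "isCont (normal_density 0 s) k" for k
    unfolding normal_density_def using s by (intro continuous_intros) auto
  then have "isCont F' k" for k
    unfolding F'_def F_def by (intro continuous_intros isCont_of_real) auto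
  moreover have "integrable lborel F'"
    unfolding F'_def using intF intkF by simp
  moreover have "(F \<longlongrightarrow> 0) G" if "(normal_density 0 s \<longlongrightarrow> 0) G" for G
    by (rule tendsto_norm_zero_cancel) (simp add: F_def norm_mult that)
  moreover have "(normal_density 0 s \<longlongrightarrow> 0) at_top" "(normal_density 0 s \<longlongrightarrow> 0) at_bot"
    unfolding normal_density_def[abs_def] using s by real_asymp+
  ultimately have "(LINT k|lborel. F' k) = 0"
    by (intro lborel_integral_derivative_eq_0[where F = F]) auto
  then have "(LINT k|lborel. complex_of_real k * F k) = \<i> * complex_of_real (D * s\<^sup>2) * (LINT k|lborel. F k)"
    unfolding F'_def using intF intkF s by (simp add: field_simps)
  then show ?thesis unfolding F_def integral_normal_density_iexp[OF s] by simp
qed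

definition phi_x :: "real \<Rightarrow> real \<Rightarrow> real" where
  "phi_x \<sigma> x = (2 * pi * \<sigma>\<^sup>2) powr (-1/4) * exp (- x\<^sup>2 / (4 * \<sigma>\<^sup>2))"

text \<open>The meter in the position representation after the coupling with eigenvalue \<open>a\<close>:
  the initial state shifted by \<open>g a\<close>.\<close>

definition meter_x :: "real \<Rightarrow> real \<Rightarrow> real \<Rightarrow> real \<Rightarrow> complex" where
  "meter_x \<sigma> g a x = complex_of_real (phi_x \<sigma> (x - g * a))"

lemma phi_k_eq_normal_density:
  assumes s: "\<sigma> > 0"
  shows "phi_k \<sigma> k = (2 * \<sigma>\<^sup>2 / pi) powr (1/4) * sqrt (pi / \<sigma>\<^sup>2) * normal_density 0 (1 / (sqrt 2 * \<sigma>)) k"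
proof -
  have "2 * pi * (1 / (sqrt 2 * \<sigma>))\<^sup>2 = pi / \<sigma>\<^sup>2" and "(1 / (sqrt 2 * \<sigma>))\<^sup>2 = 1 / (2 * \<sigma>\<^sup>2)"
    using s by (simp_all add: power_mult_distrib power_divide)
  then show ?thesis
    using s by (simp add: phi_k_def normal_density_def field_simps)
qed

lemma phi_k_squared:
  assumes s: "\<sigma> > 0"
  shows "(phi_k \<sigma> k)\<^sup>2 = normal_density 0 (1 / (2 * \<sigma>)) k"
proof -
  have "((2 * \<sigma>\<^sup>2 / pi) powr (1/4))\<^sup>2 = 1 / sqrt (2 * pi * (1 / (2 * \<sigma>))\<^sup>2)"
    using s by (simp add: power2_eq_square powr_add[symmetric] powr_half_sqrt real_sqrt_divide
        power_mult_distrib power_divide field_simps)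
  moreover have "exp (- (k\<^sup>2 * \<sigma>\<^sup>2)) ^ 2 = exp (- (k - 0)\<^sup>2 / (2 * (1 / (2 * \<sigma>))\<^sup>2))"
    using s by (simp add: exp_double[symmetric] power_mult_distrib power_divide field_simps)
  ultimately show ?thesis
    unfolding phi_k_def normal_density_def power_mult_distrib by simp
qed

lemma phi_x_normalisation:
  assumes s: "\<sigma> > 0"
  shows "(2 * \<sigma>\<^sup>2 / pi) powr (1/4) / (sqrt 2 * \<sigma>) = (2 * pi * \<sigma>\<^sup>2) powr (-1/4)"
proof -
  define b where "b = 2 * pi * \<sigma>\<^sup>2"
  have b: "b > 0" using s by (simp add: b_def)
  have "2 * \<sigma>\<^sup>2 / pi = b / pi\<^sup>2" by (simp add: b_def power2_eq_square)
  moreover have "sqrt 2 * \<sigma> = (b / pi) powr (1/2)"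
    using s by (simp add: b_def powr_half_sqrt real_sqrt_mult)
  ultimately have "(2 * \<sigma>\<^sup>2 / pi) powr (1/4) / (sqrt 2 * \<sigma>) =
      b powr (1/4) / pi\<^sup>2 powr (1/4) / (b / pi) powr (1/2)"
    using b by (simp add: powr_divide)
  also have "pi\<^sup>2 powr (1/4) = pi powr (1/2)"
    using powr_powr[of pi 2 "1/4"] by simp
  also have "b powr (1/4) / pi powr (1/2) / (b / pi) powr (1/2) = b powr (-1/4)"
    using b by (simp add: powr_divide powr_minus_divide powr_add[symmetric] field_simps)
  finally show ?thesis by (simp add: b_def)
qed

lemma phi_x_product:
  assumes s: "\<sigma> > 0"
  shows "phi_x \<sigma> (x - a) * phi_x \<sigma> (x - b) =
    exp (- (a - b)\<^sup>2 / (8 * \<sigma>\<^sup>2)) * normal_density ((a + b) / 2) \<sigma> x"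
proof -
  have "((2 * pi * \<sigma>\<^sup>2) powr (-1/4))\<^sup>2 = 1 / sqrt (2 * pi * \<sigma>\<^sup>2)"
    using s by (simp add: power2_eq_square powr_add[symmetric] powr_minus_divide powr_half_sqrt)
  moreover have "- (x - a)\<^sup>2 / (4 * \<sigma>\<^sup>2) + - (x - b)\<^sup>2 / (4 * \<sigma>\<^sup>2) =
      - (a - b)\<^sup>2 / (8 * \<sigma>\<^sup>2) + - (x - (a + b) / 2)\<^sup>2 / (2 * \<sigma>\<^sup>2)"
    using s by (simp add: field_simps power2_eq_square)
  moreover have "phi_x \<sigma> (x - a) * phi_x \<sigma> (x - b) = ((2 * pi * \<sigma>\<^sup>2) powr (-1/4))\<^sup>2 *
      exp (- (x - a)\<^sup>2 / (4 * \<sigma>\<^sup>2) + - (x - b)\<^sup>2 / (4 * \<sigma>\<^sup>2))"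
    by (simp only: phi_x_def exp_add power2_eq_square[of "_ powr _"] mult_ac)
  ultimately have "phi_x \<sigma> (x - a) * phi_x \<sigma> (x - b) = exp (- (a - b)\<^sup>2 / (8 * \<sigma>\<^sup>2)) *
      (1 / sqrt (2 * pi * \<sigma>\<^sup>2) * exp (- (x - (a + b) / 2)\<^sup>2 / (2 * \<sigma>\<^sup>2)))"
    by (simp only: exp_add mult_ac)
  then show ?thesis
    by (simp add: normal_density_def)
qed

lemma meter_k_fourier:
  assumes s: "\<sigma> > 0"
  shows "integrable lborel (\<lambda>k. exp (\<i> * complex_of_real (k * x)) * meter_k \<sigma> g a k)"
    "(LINT k|lborel. exp (\<i> * complex_of_real (k * x)) * meter_k \<sigma> g a k) / complex_of_real (sqrt (2 * pi)) =
       meter_x \<sigma> g a x"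
proof -
  define c where "c = (2 * \<sigma>\<^sup>2 / pi) powr (1/4) * sqrt (pi / \<sigma>\<^sup>2)"
  define s' where "s' = 1 / (sqrt 2 * \<sigma>)"
  have s': "s' > 0" using s by (simp add: s'_def)
  have integrand: "exp (\<i> * complex_of_real (k * x)) * meter_k \<sigma> g a k =
      complex_of_real c * (complex_of_real (normal_density 0 s' k) * iexp (k * (x - g * a)))" for k
    by (simp add: meter_k_def phi_k_eq_normal_density[OF s] c_def s'_def exp_add[symmetric] algebra_simps)
  show "integrable lborel (\<lambda>k. exp (\<i> * complex_of_real (k * x)) * meter_k \<sigma> g a k)"
    unfolding integrand by (intro integrable_mult_right integrable_normal_density_iexp[OF s'])
  have "exp (- (s'\<^sup>2 * (x - g * a)\<^sup>2) / 2) = exp (- (x - g * a)\<^sup>2 / (4 * \<sigma>\<^sup>2))"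
    using s by (simp add: s'_def power_mult_distrib power_divide field_simps)
  moreover have "c = (2 * pi * \<sigma>\<^sup>2) powr (-1/4) * sqrt (2 * pi)"
    using s phi_x_normalisation[OF s]
    by (simp add: c_def real_sqrt_divide real_sqrt_mult field_simps)
  ultimately have phi: "c * exp (- (s'\<^sup>2 * (x - g * a)\<^sup>2) / 2) / sqrt (2 * pi) = phi_x \<sigma> (x - g * a)"
    by (simp add: phi_x_def)
  show "(LINT k|lborel. exp (\<i> * complex_of_real (k * x)) * meter_k \<sigma> g a k) /
      complex_of_real (sqrt (2 * pi)) = meter_x \<sigma> g a x"
    unfolding integrand integral_mult_right_zero integral_normal_density_iexp[OF s']
    by (simp add: meter_x_def flip: phi)
qed

lemma meter_x_overlaps:
  assumes s: "\<sigma> > 0"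
  shows "integrable lborel (\<lambda>x. meter_x \<sigma> g a x * cnj (meter_x \<sigma> g a' x))"
    "integrable lborel (\<lambda>x. complex_of_real x * (meter_x \<sigma> g a x * cnj (meter_x \<sigma> g a' x)))"
    "(LINT x|lborel. meter_x \<sigma> g a x * cnj (meter_x \<sigma> g a' x)) =
       complex_of_real (exp (- g\<^sup>2 * (a - a')\<^sup>2 / (8 * \<sigma>\<^sup>2)))"
    "(LINT x|lborel. complex_of_real x * (meter_x \<sigma> g a x * cnj (meter_x \<sigma> g a' x))) =
       complex_of_real (g * (a + a') / 2 * exp (- g\<^sup>2 * (a - a')\<^sup>2 / (8 * \<sigma>\<^sup>2)))"
proof -
  define E where "E = exp (- g\<^sup>2 * (a - a')\<^sup>2 / (8 * \<sigma>\<^sup>2))"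
  have "(g * a - g * a')\<^sup>2 = g\<^sup>2 * (a - a')\<^sup>2"
    by (simp add: power_mult_distrib[symmetric] right_diff_distrib)
  then have prod: "meter_x \<sigma> g a x * cnj (meter_x \<sigma> g a' x) =
      complex_of_real (E * normal_density ((g * a + g * a') / 2) \<sigma> x)" for x
    unfolding meter_x_def complex_cnj_complex_of_real of_real_mult[symmetric] phi_x_product[OF s]
    by (simp add: E_def)
  show "integrable lborel (\<lambda>x. meter_x \<sigma> g a x * cnj (meter_x \<sigma> g a' x))"
    unfolding prod using s by (intro integrable_bounded_linear[OF bounded_linear_of_real]) simp
  show "(LINT x|lborel. meter_x \<sigma> g a x * cnj (meter_x \<sigma> g a' x)) = complex_of_real E"
    unfolding prod integral_complex_of_real using s by simp
  have moment: "complex_of_real x * (meter_x \<sigma> g a x * cnj (meter_x \<sigma> g a' x)) =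
      complex_of_real (E * (normal_density ((g * a + g * a') / 2) \<sigma> x * x))" for x
    by (simp add: prod mult_ac)
  show "integrable lborel (\<lambda>x. complex_of_real x * (meter_x \<sigma> g a x * cnj (meter_x \<sigma> g a' x)))"
    unfolding moment using integrable_normal_moment_nz_1[OF s]
    by (intro integrable_bounded_linear[OF bounded_linear_of_real]) simp
  show "(LINT x|lborel. complex_of_real x * (meter_x \<sigma> g a x * cnj (meter_x \<sigma> g a' x))) =
       complex_of_real (g * (a + a') / 2 * E)"
    unfolding moment integral_complex_of_real integral_mult_right_zero integral_normal_moment_nz_1[OF s]
    by (simp add: field_simps)
qed

lemma meter_k_overlaps:
  assumes s: "\<sigma> > 0"
  shows "integrable lborel (\<lambda>k. meter_k \<sigma> g b k * cnj (meter_k \<sigma> g b' k))"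
    "integrable lborel (\<lambda>k. complex_of_real k * (meter_k \<sigma> g b k * cnj (meter_k \<sigma> g b' k)))"
    "(LINT k|lborel. meter_k \<sigma> g b k * cnj (meter_k \<sigma> g b' k)) =
       complex_of_real (exp (- g\<^sup>2 * (b - b')\<^sup>2 / (8 * \<sigma>\<^sup>2)))"
    "(LINT k|lborel. complex_of_real k * (meter_k \<sigma> g b k * cnj (meter_k \<sigma> g b' k))) =
       \<i> * complex_of_real (g * (b' - b) / (4 * \<sigma>\<^sup>2) * exp (- g\<^sup>2 * (b - b')\<^sup>2 / (8 * \<sigma>\<^sup>2)))"
proof -
  have s': "1 / (2 * \<sigma>) > 0" using s by simp
  have "complex_of_real (phi_k \<sigma> k) * complex_of_real (phi_k \<sigma> k) =
      complex_of_real (normal_density 0 (1 / (2 * \<sigma>)) k)" for k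
    by (simp add: phi_k_squared[OF s, symmetric] power2_eq_square)
  then have prod: "meter_k \<sigma> g b k * cnj (meter_k \<sigma> g b' k) =
      complex_of_real (normal_density 0 (1 / (2 * \<sigma>)) k) * iexp (k * (g * (b' - b)))" for k
    by (simp add: meter_k_def exp_cnj exp_add[symmetric] algebra_simps)
  have "(g * (b' - b))\<^sup>2 = g\<^sup>2 * (b - b')\<^sup>2"
    by (simp add: power_mult_distrib power2_commute)
  then have "exp (- ((1 / (2 * \<sigma>))\<^sup>2 * (g * (b' - b))\<^sup>2) / 2) = exp (- g\<^sup>2 * (b - b')\<^sup>2 / (8 * \<sigma>\<^sup>2))"
    using s by (simp add: power_divide field_simps)
  moreover have "g * (b' - b) * (1 / (2 * \<sigma>))\<^sup>2 = g * (b' - b) / (4 * \<sigma>\<^sup>2)"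
    by (simp add: power_divide power_mult_distrib)
  ultimately show "(LINT k|lborel. meter_k \<sigma> g b k * cnj (meter_k \<sigma> g b' k)) =
       complex_of_real (exp (- g\<^sup>2 * (b - b')\<^sup>2 / (8 * \<sigma>\<^sup>2)))"
    "(LINT k|lborel. complex_of_real k * (meter_k \<sigma> g b k * cnj (meter_k \<sigma> g b' k))) =
       \<i> * complex_of_real (g * (b' - b) / (4 * \<sigma>\<^sup>2) * exp (- g\<^sup>2 * (b - b')\<^sup>2 / (8 * \<sigma>\<^sup>2)))"
    unfolding prod integral_normal_density_iexp[OF s'] integral_moment_normal_density_iexp[OF s']
    by simp_all
  show "integrable lborel (\<lambda>k. meter_k \<sigma> g b k * cnj (meter_k \<sigma> g b' k))"
    "integrable lborel (\<lambda>k. complex_of_real k * (meter_k \<sigma> g b k * cnj (meter_k \<sigma> g b' k)))"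
    unfolding prod by (rule integrable_normal_density_iexp[OF s'] integrable_moment_normal_density_iexp[OF s'])+
qed

lemma fourier_path_sum:
  fixes C :: "'i \<Rightarrow> complex"
  assumes s: "\<sigma> > 0"
  shows "(LINT k|lborel. exp (\<i> * complex_of_real (k * x)) * (\<Sum>p\<in>I. C p * meter_k \<sigma> g (a p) k))
      / complex_of_real (sqrt (2 * pi)) = (\<Sum>p\<in>I. C p * meter_x \<sigma> g (a p) x)"
proof -
  have "(LINT k|lborel. exp (\<i> * complex_of_real (k * x)) * (\<Sum>p\<in>I. C p * meter_k \<sigma> g (a p) k)) =
      (\<Sum>p\<in>I. C p * (LINT k|lborel. exp (\<i> * complex_of_real (k * x)) * meter_k \<sigma> g (a p) k))"
    using meter_k_fourier(1)[OF s]
    by (simp add: sum_distrib_left mult.left_commute Bochner_Integration.integral_sum)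
  then show ?thesis
    by (simp add: sum_divide_distrib meter_k_fourier(2)[OF s, symmetric])
qed

lemma Phi_xk_Phi_kx_path_sums:
  assumes s: "\<sigma> > 0"
    and kk: "\<And>g k1 k2. Phi_kk T ti t1 t2 tf psi_i psi_f A1 A2 \<sigma> g k1 k2 =
       (\<Sum>p\<in>I. C p * meter_k \<sigma> g (\<alpha> p) k1 * meter_k \<sigma> g (\<beta> p) k2)"
  shows "Phi_xk T ti t1 t2 tf psi_i psi_f A1 A2 \<sigma> g =
      (\<lambda>x k. \<Sum>p\<in>I. C p * meter_x \<sigma> g (\<alpha> p) x * meter_k \<sigma> g (\<beta> p) k)"
    "Phi_kx T ti t1 t2 tf psi_i psi_f A1 A2 \<sigma> g =
      (\<lambda>k x. \<Sum>p\<in>I. C p * meter_k \<sigma> g (\<alpha> p) k * meter_x \<sigma> g (\<beta> p) x)"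
proof -
  have "Phi_xk T ti t1 t2 tf psi_i psi_f A1 A2 \<sigma> g x k =
      (\<Sum>p\<in>I. C p * meter_x \<sigma> g (\<alpha> p) x * meter_k \<sigma> g (\<beta> p) k)" for x k
    using fourier_path_sum[OF s, where C = "\<lambda>p. C p * meter_k \<sigma> g (\<beta> p) k" and a = \<alpha> and x = x and g = g]
    by (simp add: Phi_xk_def kk mult_ac)
  moreover have "Phi_kx T ti t1 t2 tf psi_i psi_f A1 A2 \<sigma> g k x =
      (\<Sum>p\<in>I. C p * meter_k \<sigma> g (\<alpha> p) k * meter_x \<sigma> g (\<beta> p) x)" for x k
    using fourier_path_sum[OF s, where C = "\<lambda>p. C p * meter_k \<sigma> g (\<alpha> p) k" and a = \<beta> and x = x and g = g]
    by (simp add: Phi_kx_def kk mult_ac)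
  ultimately show "Phi_xk T ti t1 t2 tf psi_i psi_f A1 A2 \<sigma> g =
      (\<lambda>x k. \<Sum>p\<in>I. C p * meter_x \<sigma> g (\<alpha> p) x * meter_k \<sigma> g (\<beta> p) k)"
    "Phi_kx T ti t1 t2 tf psi_i psi_f A1 A2 \<sigma> g =
      (\<lambda>k x. \<Sum>p\<in>I. C p * meter_k \<sigma> g (\<alpha> p) k * meter_x \<sigma> g (\<beta> p) x)"
    by (simp_all add: fun_eq_iff)
qed

lemma lborel_pair_integral_product:
  fixes f g :: "real \<Rightarrow> complex"
  assumes f: "integrable lborel f" and g: "integrable lborel g"
  shows "integrable (lborel::(real \<times> real) measure) (\<lambda>z. f (fst z) * g (snd z))"
    "(LINT z|(lborel::(real \<times> real) measure). f (fst z) * g (snd z)) =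
       (LINT x|lborel. f x) * (LINT y|lborel. g y)"
proof -
  have [measurable]: "f \<in> borel_measurable lborel" "g \<in> borel_measurable lborel"
    using f g by auto
  have int: "integrable (lborel \<Otimes>\<^sub>M lborel) (\<lambda>z. f (fst z) * g (snd z))"
    by (rule lborel_pair.Fubini_integrable) (use f g in \<open>auto simp: norm_mult\<close>)
  then show "integrable (lborel::(real \<times> real) measure) (\<lambda>z. f (fst z) * g (snd z))"
    by (simp add: lborel_prod)
  have "(LINT z|(lborel \<Otimes>\<^sub>M lborel). f (fst z) * g (snd z)) = (LINT x|lborel. LINT y|lborel. f x * g y)"
    using lborel_pair.integral_fst'[OF int] by simp
  then show "(LINT z|(lborel::(real \<times> real) measure). f (fst z) * g (snd z)) =
       (LINT x|lborel. f x) * (LINT y|lborel. g y)"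
    by (simp add: lborel_prod)
qed

lemma lborel_pair_integral_double_sum:
  fixes a b :: "'i \<Rightarrow> 'i \<Rightarrow> real \<Rightarrow> complex"
  assumes a: "\<And>p q. p \<in> I \<Longrightarrow> q \<in> I \<Longrightarrow> integrable lborel (a p q)"
    and b: "\<And>p q. p \<in> I \<Longrightarrow> q \<in> I \<Longrightarrow> integrable lborel (b p q)"
  shows "integrable (lborel::(real \<times> real) measure)
      (\<lambda>z. \<Sum>p\<in>I. \<Sum>q\<in>I. c p q * (a p q (fst z) * b p q (snd z)))"
    "(LINT z|(lborel::(real \<times> real) measure). (\<Sum>p\<in>I. \<Sum>q\<in>I. c p q * (a p q (fst z) * b p q (snd z)))) =
     (\<Sum>p\<in>I. \<Sum>q\<in>I. c p q * ((LINT u|lborel. a p q u) * (LINT v|lborel. b p q v)))"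
  using lborel_pair_integral_product[OF a b]
  by (simp_all add: Bochner_Integration.integral_sum Bochner_Integration.integrable_sum)

lemma cmod_superposition_squared:
  "(cmod (\<Sum>p\<in>I. C p * f p u * h p v))\<^sup>2 =
    Re (\<Sum>p\<in>I. \<Sum>q\<in>I. (C p * cnj (C q)) * ((f p u * cnj (f q u)) * (h p v * cnj (h q v))))"
proof -
  have "complex_of_real ((cmod (\<Sum>p\<in>I. C p * f p u * h p v))\<^sup>2) =
      (\<Sum>p\<in>I. C p * f p u * h p v) * cnj (\<Sum>p\<in>I. C p * f p u * h p v)"
    by (rule complex_norm_square)
  also have "\<dots> = (\<Sum>p\<in>I. C p * f p u * h p v) * (\<Sum>q\<in>I. cnj (C q) * cnj (f q u) * cnj (h q v))"
    by (simp add: cnj_sum)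
  also have "\<dots> = (\<Sum>p\<in>I. \<Sum>q\<in>I. (C p * cnj (C q)) * ((f p u * cnj (f q u)) * (h p v * cnj (h q v))))"
    by (simp add: sum_product mult_ac)
  finally show ?thesis by (metis Re_complex_of_real)
qed

lemma mean_prod_superposition:
  fixes f h :: "'i \<Rightarrow> real \<Rightarrow> complex"
  assumes f: "\<And>p q. p \<in> I \<Longrightarrow> q \<in> I \<Longrightarrow> integrable lborel (\<lambda>u. f p u * cnj (f q u))"
      "\<And>p q. p \<in> I \<Longrightarrow> q \<in> I \<Longrightarrow> integrable lborel (\<lambda>u. complex_of_real u * (f p u * cnj (f q u)))"
    and h: "\<And>p q. p \<in> I \<Longrightarrow> q \<in> I \<Longrightarrow> integrable lborel (\<lambda>v. h p v * cnj (h q v))"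
      "\<And>p q. p \<in> I \<Longrightarrow> q \<in> I \<Longrightarrow> integrable lborel (\<lambda>v. complex_of_real v * (h p v * cnj (h q v)))"
  shows "mean_prod (\<lambda>u v. \<Sum>p\<in>I. C p * f p u * h p v) =
    Re (\<Sum>p\<in>I. \<Sum>q\<in>I. C p * cnj (C q) *
      ((LINT u|lborel. complex_of_real u * (f p u * cnj (f q u))) *
       (LINT v|lborel. complex_of_real v * (h p v * cnj (h q v))))) /
    Re (\<Sum>p\<in>I. \<Sum>q\<in>I. C p * cnj (C q) *
      ((LINT u|lborel. f p u * cnj (f q u)) * (LINT v|lborel. h p v * cnj (h q v))))"
proof -
  define a0 a1 b0 b1 where "a0 p q u = f p u * cnj (f q u)" and "a1 p q u = complex_of_real u * a0 p q u"
    and "b0 p q v = h p v * cnj (h q v)" and "b1 p q v = complex_of_real v * b0 p q v"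
    for p q :: 'i and u v :: real
  have num: "(\<lambda>z. fst z * snd z * (cmod (\<Sum>p\<in>I. C p * f p (fst z) * h p (snd z)))\<^sup>2) =
      (\<lambda>z. Re (\<Sum>p\<in>I. \<Sum>q\<in>I. (C p * cnj (C q)) * (a1 p q (fst z) * b1 p q (snd z))))"
  proof
    fix z :: "real \<times> real"
    have "fst z * snd z * (cmod (\<Sum>p\<in>I. C p * f p (fst z) * h p (snd z)))\<^sup>2 =
        Re (complex_of_real (fst z * snd z) * (\<Sum>p\<in>I. \<Sum>q\<in>I. (C p * cnj (C q)) *
          (a0 p q (fst z) * b0 p q (snd z))))"
      unfolding cmod_superposition_squared a0_def b0_def by simp
    then show "fst z * snd z * (cmod (\<Sum>p\<in>I. C p * f p (fst z) * h p (snd z)))\<^sup>2 =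
        Re (\<Sum>p\<in>I. \<Sum>q\<in>I. (C p * cnj (C q)) * (a1 p q (fst z) * b1 p q (snd z)))"
      by (simp add: a1_def b1_def sum_distrib_left mult_ac)
  qed
  have den: "(\<lambda>z. (cmod (\<Sum>p\<in>I. C p * f p (fst z) * h p (snd z)))\<^sup>2) =
      (\<lambda>z. Re (\<Sum>p\<in>I. \<Sum>q\<in>I. (C p * cnj (C q)) * (a0 p q (fst z) * b0 p q (snd z))))"
    unfolding cmod_superposition_squared a0_def b0_def ..
  have int: "integrable lborel (a0 p q)" "integrable lborel (a1 p q)"
    "integrable lborel (b0 p q)" "integrable lborel (b1 p q)" if "p \<in> I" "q \<in> I" for p q
    using f[OF that] h[OF that] by (simp_all add: a0_def[abs_def] a1_def[abs_def] b0_def[abs_def] b1_def[abs_def])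
  note N = lborel_pair_integral_double_sum[OF int(2) int(4), where c = "\<lambda>p q. C p * cnj (C q)"]
    and D = lborel_pair_integral_double_sum[OF int(1) int(3), where c = "\<lambda>p q. C p * cnj (C q)"]
  have "mean_prod (\<lambda>u v. \<Sum>p\<in>I. C p * f p u * h p v) =
      Re (\<Sum>p\<in>I. \<Sum>q\<in>I. C p * cnj (C q) * ((LINT u|lborel. a1 p q u) * (LINT v|lborel. b1 p q v))) /
      Re (\<Sum>p\<in>I. \<Sum>q\<in>I. C p * cnj (C q) * ((LINT u|lborel. a0 p q u) * (LINT v|lborel. b0 p q v)))"
    unfolding mean_prod_def num den
    by (subst (1 2) integral_bounded_linear[OF bounded_linear_Re]) (simp_all only: N D)
  then show ?thesis by (simp add: a0_def a1_def b0_def b1_def)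
qed

section \<open>The pointer correlations for small coupling\<close>

text \<open>The pointer states of two paths \<open>p\<close>, \<open>q\<close> overlap with weight \<open>exp (- g\<^sup>2 * rate)\<close>.\<close>

definition pointer_overlap_rate :: "real \<Rightarrow> ('i \<Rightarrow> real) \<Rightarrow> ('i \<Rightarrow> real) \<Rightarrow> 'i \<Rightarrow> 'i \<Rightarrow> real" where
  "pointer_overlap_rate \<sigma> \<alpha> \<beta> p q = ((\<alpha> p - \<alpha> q)\<^sup>2 + (\<beta> p - \<beta> q)\<^sup>2) / (8 * \<sigma>\<^sup>2)"

lemma mean_prod_pointer_superposition:
  fixes C :: "'i \<Rightarrow> complex"
  assumes s: "\<sigma> > 0"
  shows "mean_prod (\<lambda>x k. \<Sum>p\<in>I. C p * meter_x \<sigma> g (\<alpha> p) x * meter_k \<sigma> g (\<beta> p) k) =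
    g\<^sup>2 * (\<Sum>p\<in>I. \<Sum>q\<in>I. Re (\<i> * (C p * cnj (C q))) * ((\<alpha> p + \<alpha> q) * (\<beta> q - \<beta> p) / (8 * \<sigma>\<^sup>2)) *
                  exp (- (g\<^sup>2 * pointer_overlap_rate \<sigma> \<alpha> \<beta> p q)))
      / (\<Sum>p\<in>I. \<Sum>q\<in>I. Re (C p * cnj (C q)) * exp (- (g\<^sup>2 * pointer_overlap_rate \<sigma> \<alpha> \<beta> p q)))"
proof -
  have exp_rate: "exp (- g\<^sup>2 * (\<alpha> p - \<alpha> q)\<^sup>2 / (8 * \<sigma>\<^sup>2)) * exp (- g\<^sup>2 * (\<beta> p - \<beta> q)\<^sup>2 / (8 * \<sigma>\<^sup>2)) =
      exp (- (g\<^sup>2 * pointer_overlap_rate \<sigma> \<alpha> \<beta> p q))" for p q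
    unfolding pointer_overlap_rate_def exp_add[symmetric] by (simp add: add_divide_distrib algebra_simps)
  have "mean_prod (\<lambda>x k. \<Sum>p\<in>I. C p * meter_x \<sigma> g (\<alpha> p) x * meter_k \<sigma> g (\<beta> p) k) =
    (\<Sum>p\<in>I. \<Sum>q\<in>I. g\<^sup>2 * (Re (\<i> * (C p * cnj (C q))) * ((\<alpha> p + \<alpha> q) * (\<beta> q - \<beta> p) / (8 * \<sigma>\<^sup>2)) *
                  exp (- (g\<^sup>2 * pointer_overlap_rate \<sigma> \<alpha> \<beta> p q))))
      / (\<Sum>p\<in>I. \<Sum>q\<in>I. Re (C p * cnj (C q)) * exp (- (g\<^sup>2 * pointer_overlap_rate \<sigma> \<alpha> \<beta> p q)))"
    unfolding mean_prod_superposition[OF meter_x_overlaps(1,2)[OF s] meter_k_overlaps(1,2)[OF s]]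
      meter_x_overlaps(3,4)[OF s] meter_k_overlaps(3,4)[OF s] Re_sum exp_rate[symmetric]
    by (intro arg_cong2[where f = "(/)"] sum.cong refl) (simp_all add: field_simps power2_eq_square)
  then show ?thesis
    by (simp add: sum_distrib_left)
qed

lemma mean_prod_pointer_superposition_swap:
  fixes C :: "'i \<Rightarrow> complex"
  assumes s: "\<sigma> > 0"
  shows "mean_prod (\<lambda>k x. \<Sum>p\<in>I. C p * meter_k \<sigma> g (\<alpha> p) k * meter_x \<sigma> g (\<beta> p) x) =
    mean_prod (\<lambda>x k. \<Sum>p\<in>I. C p * meter_x \<sigma> g (\<beta> p) x * meter_k \<sigma> g (\<alpha> p) k)"
  unfolding mean_prod_superposition[OF meter_x_overlaps(1,2)[OF s] meter_k_overlaps(1,2)[OF s]]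
    mean_prod_superposition[OF meter_k_overlaps(1,2)[OF s] meter_x_overlaps(1,2)[OF s]]
  by (simp add: mult.commute)

lemma weighted_ratio_asymptotics:
  fixes a b w :: "'i \<Rightarrow> 'i \<Rightarrow> real"
  assumes nonzero: "(\<Sum>p\<in>I. \<Sum>q\<in>I. b p q) \<noteq> 0"
  shows "(\<lambda>g. g\<^sup>2 * (\<Sum>p\<in>I. \<Sum>q\<in>I. a p q * exp (- (g\<^sup>2 * w p q))) / (\<Sum>p\<in>I. \<Sum>q\<in>I. b p q * exp (- (g\<^sup>2 * w p q)))
        - g\<^sup>2 * ((\<Sum>p\<in>I. \<Sum>q\<in>I. a p q) / (\<Sum>p\<in>I. \<Sum>q\<in>I. b p q))) \<in> O[at_right 0](\<lambda>g. g ^ 3)"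
proof -
  define A0 B0 where "A0 = (\<Sum>p\<in>I. \<Sum>q\<in>I. a p q)" and "B0 = (\<Sum>p\<in>I. \<Sum>q\<in>I. b p q)"
  define A B where "A g = (\<Sum>p\<in>I. \<Sum>q\<in>I. a p q * exp (- (g\<^sup>2 * w p q)))"
    and "B g = (\<Sum>p\<in>I. \<Sum>q\<in>I. b p q * exp (- (g\<^sup>2 * w p q)))" for g :: real
  define S where "S g = (\<Sum>p\<in>I. \<Sum>q\<in>I. (a p q * B0 - A0 * b p q) * (exp (- (g\<^sup>2 * w p q)) - 1))" for g
  have "B0 \<noteq> 0" using nonzero by (simp add: B0_def)
  txt \<open>The constant terms of \<open>A g * B0 - A0 * B g\<close> cancel, leaving \<open>S g = O(g\<^sup>2)\<close>.\<close>
  have S_eq: "S g = A g * B0 - A0 * B g" for g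
  proof -
    have "(\<Sum>p\<in>I. \<Sum>q\<in>I. a p q * B0 - A0 * b p q) = 0"
      by (simp add: sum_subtractf A0_def B0_def flip: sum_distrib_left sum_distrib_right)
    then show ?thesis
      by (simp add: S_def A_def B_def right_diff_distrib left_diff_distrib sum_subtractf
          sum_distrib_left sum_distrib_right mult_ac)
  qed
  have "S \<in> O[at_right 0](\<lambda>g. g\<^sup>2)"
    unfolding S_def by (intro big_sum_in_bigo landau_o.big.mult_left) real_asymp
  moreover have "(B \<longlongrightarrow> B0) (at_right 0)"
    unfolding B_def B0_def by (auto intro!: tendsto_eq_intros)
  then have "(\<lambda>g. 1 / (B g * B0)) \<in> O[at_right 0](\<lambda>_. 1)"
    using \<open>B0 \<noteq> 0\<close> by (intro bigoI_tendsto[where c = "1 / (B0 * B0)"]) (auto intro!: tendsto_eq_intros)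
  ultimately have "(\<lambda>g. g\<^sup>2 * S g * (1 / (B g * B0))) \<in> O[at_right 0](\<lambda>g. g\<^sup>2 * g\<^sup>2 * 1)"
    by (intro landau_o.big.mult landau_o.big_refl)
  also have "(\<lambda>g::real. g\<^sup>2 * g\<^sup>2 * 1) \<in> O[at_right 0](\<lambda>g. g ^ 3)"
    by real_asymp
  finally have bigo: "(\<lambda>g. g\<^sup>2 * S g * (1 / (B g * B0))) \<in> O[at_right 0](\<lambda>g. g ^ 3)" .
  have "eventually (\<lambda>g. B g \<noteq> 0) (at_right 0)"
    using \<open>(B \<longlongrightarrow> B0) (at_right 0)\<close> \<open>B0 \<noteq> 0\<close> by (rule tendsto_imp_eventually_ne)
  then have "eventually (\<lambda>g. g\<^sup>2 * S g * (1 / (B g * B0)) = g\<^sup>2 * A g / B g - g\<^sup>2 * (A0 / B0)) (at_right 0)"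
    by eventually_elim (use \<open>B0 \<noteq> 0\<close> in \<open>simp add: S_eq field_simps\<close>)
  from landau_o.big.in_cong[OF this] bigo show ?thesis
    by (simp add: A_def B_def A0_def B0_def)
qed

lemma double_sum_cnj_product: "(\<Sum>p\<in>I. \<Sum>q\<in>I. Re (C p * cnj (C q))) = (cmod (\<Sum>p\<in>I. C p))\<^sup>2"
proof -
  have "(\<Sum>p\<in>I. \<Sum>q\<in>I. C p * cnj (C q)) = (\<Sum>p\<in>I. C p) * cnj (\<Sum>p\<in>I. C p)"
    by (simp add: sum_product cnj_sum)
  also have "\<dots> = complex_of_real ((cmod (\<Sum>p\<in>I. C p))\<^sup>2)"
    by (rule complex_norm_square[symmetric])
  finally have "Re (\<Sum>p\<in>I. \<Sum>q\<in>I. C p * cnj (C q)) = (cmod (\<Sum>p\<in>I. C p))\<^sup>2"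
    by (simp only: Re_complex_of_real)
  then show ?thesis
    by (simp only: Re_sum)
qed

lemma double_sum_pointer_moments:
  fixes C :: "'i \<Rightarrow> complex" and \<alpha> \<beta> :: "'i \<Rightarrow> real" and I :: "'i set"
  defines "N \<equiv> \<Sum>p\<in>I. C p" and "P \<equiv> \<Sum>p\<in>I. C p * \<alpha> p"
    and "Q \<equiv> \<Sum>p\<in>I. C p * \<beta> p" and "R \<equiv> \<Sum>p\<in>I. C p * \<alpha> p * \<beta> p"
  shows "(\<Sum>p\<in>I. \<Sum>q\<in>I. Im (C p * cnj (C q)) * ((\<alpha> p + \<alpha> q) * (\<beta> q - \<beta> p))) =
    2 * (Im (P * cnj Q) - Im (R * cnj N))"
proof -
  have "(\<Sum>p\<in>I. \<Sum>q\<in>I. C p * cnj (C q) * complex_of_real ((\<alpha> p + \<alpha> q) * (\<beta> q - \<beta> p))) =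
     (\<Sum>p\<in>I. \<Sum>q\<in>I. (C p * \<alpha> p) * cnj (C q * \<beta> q)) - (\<Sum>p\<in>I. \<Sum>q\<in>I. (C p * \<alpha> p * \<beta> p) * cnj (C q))
   + (\<Sum>p\<in>I. \<Sum>q\<in>I. C p * cnj (C q * \<alpha> q * \<beta> q)) - (\<Sum>p\<in>I. \<Sum>q\<in>I. (C p * \<beta> p) * cnj (C q * \<alpha> q))"
    by (simp add: sum.distrib sum_subtractf algebra_simps)
  also have "\<dots> = P * cnj Q - R * cnj N + N * cnj R - Q * cnj P"
    by (simp only: sum_product[symmetric] cnj_sum N_def P_def Q_def R_def)
  finally have "Im (\<Sum>p\<in>I. \<Sum>q\<in>I. C p * cnj (C q) * complex_of_real ((\<alpha> p + \<alpha> q) * (\<beta> q - \<beta> p))) =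
      Im (P * cnj Q - R * cnj N + N * cnj R - Q * cnj P)"
    by (rule arg_cong)
  moreover have "Im (N * cnj R) = - Im (R * cnj N)" "Im (Q * cnj P) = - Im (P * cnj Q)"
    by (simp_all add: algebra_simps)
  ultimately show ?thesis
    by (simp add: sum_distrib_left)
qed

lemma Im_weak_value_product:
  assumes N: "N \<noteq> 0"
  shows "Im (R / N - P / N * cnj (Q / N)) = (Im (R * cnj N) - Im (P * cnj Q)) / (cmod N)\<^sup>2"
proof -
  have "Im (R / N) = Im (R * cnj N) / (cmod N)\<^sup>2"
    by (simp add: Im_divide cmod_power2)
  moreover have "P / N * cnj (Q / N) = P * cnj Q / complex_of_real ((cmod N)\<^sup>2)"
    by (simp add: complex_cnj_divide flip: complex_norm_square)
  then have "Im (P / N * cnj (Q / N)) = Im (P * cnj Q) / (cmod N)\<^sup>2"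
    by (simp only: Im_divide_of_real)
  ultimately show ?thesis
    by (simp only: minus_complex.sel diff_divide_distrib)
qed

lemma pointer_moment_ratio:
  fixes C :: "'i \<Rightarrow> complex" and \<alpha> \<beta> :: "'i \<Rightarrow> real" and I :: "'i set"
  assumes N: "(\<Sum>p\<in>I. C p) \<noteq> 0"
  defines "N \<equiv> \<Sum>p\<in>I. C p" and "P \<equiv> \<Sum>p\<in>I. C p * \<alpha> p"
    and "Q \<equiv> \<Sum>p\<in>I. C p * \<beta> p" and "R \<equiv> \<Sum>p\<in>I. C p * \<alpha> p * \<beta> p"
  shows "(\<Sum>p\<in>I. \<Sum>q\<in>I. Re (\<i> * (C p * cnj (C q))) * ((\<alpha> p + \<alpha> q) * (\<beta> q - \<beta> p) / (8 * \<sigma>\<^sup>2))) /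
      (\<Sum>p\<in>I. \<Sum>q\<in>I. Re (C p * cnj (C q))) = Im (R / N - P / N * cnj (Q / N)) / (4 * \<sigma>\<^sup>2)"
proof -
  have "Re (\<i> * (C p * cnj (C q))) * ((\<alpha> p + \<alpha> q) * (\<beta> q - \<beta> p) / (8 * \<sigma>\<^sup>2)) =
      - (Im (C p * cnj (C q)) * ((\<alpha> p + \<alpha> q) * (\<beta> q - \<beta> p))) / (8 * \<sigma>\<^sup>2)" for p q
    by (simp add: algebra_simps)
  then have "(\<Sum>p\<in>I. \<Sum>q\<in>I. Re (\<i> * (C p * cnj (C q))) * ((\<alpha> p + \<alpha> q) * (\<beta> q - \<beta> p) / (8 * \<sigma>\<^sup>2))) =
      - (\<Sum>p\<in>I. \<Sum>q\<in>I. Im (C p * cnj (C q)) * ((\<alpha> p + \<alpha> q) * (\<beta> q - \<beta> p))) / (8 * \<sigma>\<^sup>2)"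
    by (simp only: sum_negf sum_divide_distrib[symmetric])
  also have "\<dots> = (Im (R * cnj N) - Im (P * cnj Q)) / (4 * \<sigma>\<^sup>2)"
    unfolding double_sum_pointer_moments[of C \<alpha> \<beta> I, folded N_def P_def Q_def R_def]
    by (simp add: divide_simps)
  finally show ?thesis
    using N unfolding double_sum_cnj_product[of C I, folded N_def] Im_weak_value_product[OF N[folded N_def]]
    by (simp add: divide_simps)
qed

lemma pointer_correlation_asymptotics:
  fixes C :: "'i \<Rightarrow> complex" and \<alpha> \<beta> :: "'i \<Rightarrow> real" and I :: "'i set"
  assumes s: "\<sigma> > 0" and N: "(\<Sum>p\<in>I. C p) \<noteq> 0"
  defines "N \<equiv> \<Sum>p\<in>I. C p" and "P \<equiv> \<Sum>p\<in>I. C p * \<alpha> p"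
    and "Q \<equiv> \<Sum>p\<in>I. C p * \<beta> p" and "R \<equiv> \<Sum>p\<in>I. C p * \<alpha> p * \<beta> p"
  shows "(\<lambda>g. mean_prod (\<lambda>x k. \<Sum>p\<in>I. C p * meter_x \<sigma> g (\<alpha> p) x * meter_k \<sigma> g (\<beta> p) k)
      - g\<^sup>2 / (4 * \<sigma>\<^sup>2) * Im (R / N - P / N * cnj (Q / N))) \<in> O[at_right 0](\<lambda>g. g ^ 3)"
proof -
  have "(\<Sum>p\<in>I. \<Sum>q\<in>I. Re (C p * cnj (C q))) \<noteq> 0"
    using N by (simp only: double_sum_cnj_product) simp
  from weighted_ratio_asymptotics[OF this, where w = "pointer_overlap_rate \<sigma> \<alpha> \<beta>"
      and a = "\<lambda>p q. Re (\<i> * (C p * cnj (C q))) * ((\<alpha> p + \<alpha> q) * (\<beta> q - \<beta> p) / (8 * \<sigma>\<^sup>2))"]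
  show ?thesis
    unfolding mean_prod_pointer_superposition[OF s] pointer_moment_ratio[OF N, where \<sigma> = \<sigma>]
      N_def P_def Q_def R_def
    by (simp only: times_divide_eq_right times_divide_eq_left)
qed

lemma pointer_correlation_asymptotics_swap:
  fixes C :: "'i \<Rightarrow> complex" and \<alpha> \<beta> :: "'i \<Rightarrow> real" and I :: "'i set"
  assumes s: "\<sigma> > 0" and N: "(\<Sum>p\<in>I. C p) \<noteq> 0"
  defines "N \<equiv> \<Sum>p\<in>I. C p" and "P \<equiv> \<Sum>p\<in>I. C p * \<alpha> p"
    and "Q \<equiv> \<Sum>p\<in>I. C p * \<beta> p" and "R \<equiv> \<Sum>p\<in>I. C p * \<alpha> p * \<beta> p"
  shows "(\<lambda>g. mean_prod (\<lambda>k x. \<Sum>p\<in>I. C p * meter_k \<sigma> g (\<alpha> p) k * meter_x \<sigma> g (\<beta> p) x)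
      - g\<^sup>2 / (4 * \<sigma>\<^sup>2) * Im (R / N + P / N * cnj (Q / N))) \<in> O[at_right 0](\<lambda>g. g ^ 3)"
proof -
  have "(\<Sum>p\<in>I. C p * \<beta> p * \<alpha> p) = R"
    by (simp add: R_def mult_ac)
  moreover have "Im (R / N - Q / N * cnj (P / N)) = Im (R / N + P / N * cnj (Q / N))"
  proof -
    have "Q / N * cnj (P / N) = cnj (P / N * cnj (Q / N))"
      by (simp add: mult.commute)
    then have "Im (Q / N * cnj (P / N)) = - Im (P / N * cnj (Q / N))"
      by (simp only: cnj.sel)
    then show ?thesis
      by (simp only: minus_complex.sel plus_complex.sel diff_minus_eq_add)
  qed
  ultimately show ?thesis
    using pointer_correlation_asymptotics[OF s N, of \<beta> \<alpha>, folded N_def P_def Q_def]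
    by (simp only: mean_prod_pointer_superposition_swap[OF s])
qed

lemma bigo_combination_over_square:
  fixes f1 f2 :: "real \<Rightarrow> real" and s z :: complex
  assumes "(\<lambda>g. f1 g - g\<^sup>2 / (4 * \<sigma>\<^sup>2) * Im (s - z)) \<in> O[at_right 0](\<lambda>g. g ^ 3)"
    and "(\<lambda>g. f2 g - g\<^sup>2 / (4 * \<sigma>\<^sup>2) * Im (s + z)) \<in> O[at_right 0](\<lambda>g. g ^ 3)"
    and "\<sigma> \<noteq> 0"
  shows "(\<lambda>g. Im s - 2 * \<sigma>\<^sup>2 / g\<^sup>2 * (f1 g + f2 g)) \<in> O[at_right 0](\<lambda>g. g)"
proof -
  have "(\<lambda>g. (- 2 * \<sigma>\<^sup>2 / g\<^sup>2) * ((f1 g - g\<^sup>2 / (4 * \<sigma>\<^sup>2) * Im (s - z)) + (f2 g - g\<^sup>2 / (4 * \<sigma>\<^sup>2) * Im (s + z))))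
      \<in> O[at_right 0](\<lambda>g. (1 / g\<^sup>2) * g ^ 3)"
    using assms(1,2) by (intro landau_o.big.mult sum_in_bigo(1)) real_asymp+
  also have "(\<lambda>g::real. (1 / g\<^sup>2) * g ^ 3) \<in> O[at_right 0](\<lambda>g. g)"
    by real_asymp
  finally have bigo: "(\<lambda>g. (- 2 * \<sigma>\<^sup>2 / g\<^sup>2) * ((f1 g - g\<^sup>2 / (4 * \<sigma>\<^sup>2) * Im (s - z)) +
      (f2 g - g\<^sup>2 / (4 * \<sigma>\<^sup>2) * Im (s + z)))) \<in> O[at_right 0](\<lambda>g. g)" .
  have "eventually (\<lambda>g. (- 2 * \<sigma>\<^sup>2 / g\<^sup>2) * ((f1 g - g\<^sup>2 / (4 * \<sigma>\<^sup>2) * Im (s - z)) +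
      (f2 g - g\<^sup>2 / (4 * \<sigma>\<^sup>2) * Im (s + z))) = Im s - 2 * \<sigma>\<^sup>2 / g\<^sup>2 * (f1 g + f2 g)) (at_right 0)"
    using eventually_at_right_less[of "0::real"]
  proof eventually_elim
    case (elim g)
    have "Im (s - z) + Im (s + z) = 2 * Im s" by simp
    then show ?case using elim assms(3) by (simp add: field_simps)
  qed
  from landau_o.big.in_cong[OF this] bigo show ?thesis by (rule iffD1)
qed

theorem mainTheorem8:
  fixes T :: "real \<Rightarrow> real \<Rightarrow> complex ^ 'n ^ 'n"
    and ti t1 t2 tf :: real
    and A1 A2 :: "complex ^ 'n ^ 'n"
    and psi_i psi_f :: "complex ^ 'n"
    and \<sigma> :: real
  assumes times: "ti < t1" "t1 < t2" "t2 < tf"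
    and unitary: "\<And>a b. unitary_mat (T b a)"
    and compose: "\<And>a b c. a \<le> b \<Longrightarrow> b \<le> c \<Longrightarrow> T c b ** T b a = T c a"
    and sa1: "self_adjoint A1" and sa2: "self_adjoint A2"
    and unit_i: "braket psi_i psi_i = 1" and unit_f: "braket psi_f psi_f = 1"
    and nonorth: "braket psi_f (T tf ti *v psi_i) \<noteq> 0"
    and sigma_pos: "\<sigma> > 0"
  shows
    "(\<lambda>g. mean_prod (Phi_xk T ti t1 t2 tf psi_i psi_f A1 A2 \<sigma> g)
        - g\<^sup>2 / (4 * \<sigma>\<^sup>2) * Im (seq_weak_value T ti t1 t2 tf psi_i psi_f A2 A1
            - weak_value T ti tf psi_i psi_f A1 t1 * cnj (weak_value T ti tf psi_i psi_f A2 t2)))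
      \<in> O[at_right 0](\<lambda>g. g ^ 3)
   \<and> (\<lambda>g. mean_prod (Phi_kx T ti t1 t2 tf psi_i psi_f A1 A2 \<sigma> g)
        - g\<^sup>2 / (4 * \<sigma>\<^sup>2) * Im (seq_weak_value T ti t1 t2 tf psi_i psi_f A2 A1
            + weak_value T ti tf psi_i psi_f A1 t1 * cnj (weak_value T ti tf psi_i psi_f A2 t2)))
      \<in> O[at_right 0](\<lambda>g. g ^ 3)
   \<and> (\<lambda>g. Im (seq_weak_value T ti t1 t2 tf psi_i psi_f A2 A1)
        - 2 * \<sigma>\<^sup>2 / g\<^sup>2 * (mean_prod (Phi_xk T ti t1 t2 tf psi_i psi_f A1 A2 \<sigma> g)
                             + mean_prod (Phi_kx T ti t1 t2 tf psi_i psi_f A1 A2 \<sigma> g)))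
      \<in> O[at_right 0](\<lambda>g. g)"
proof -
  obtain I :: "((complex^'n) \<times> (complex^'n)) set" and C \<alpha> \<beta>
    where N: "braket psi_f (T tf ti *v psi_i) = (\<Sum>p\<in>I. C p)"
    and P: "braket psi_f (T tf t1 *v (A1 *v (T t1 ti *v psi_i))) = (\<Sum>p\<in>I. C p * \<alpha> p)"
    and Q: "braket psi_f (T tf t2 *v (A2 *v (T t2 ti *v psi_i))) = (\<Sum>p\<in>I. C p * \<beta> p)"
    and R: "braket psi_f (T tf t2 *v (A2 *v (T t2 t1 *v (A1 *v (T t1 ti *v psi_i))))) =
      (\<Sum>p\<in>I. C p * \<alpha> p * \<beta> p)"
    and kk: "\<And>g k1 k2. Phi_kk T ti t1 t2 tf psi_i psi_f A1 A2 \<sigma> g k1 k2 =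
      (\<Sum>p\<in>I. C p * meter_k \<sigma> g (\<alpha> p) k1 * meter_k \<sigma> g (\<beta> p) k2)"
    by (rule post_selected_path_sums[where T = T and \<sigma> = \<sigma> and psi_i = psi_i and psi_f = psi_f,
          OF times compose sa1 sa2]) blast+
  have N0: "(\<Sum>p\<in>I. C p) \<noteq> 0" using nonorth N by simp
  note weak_values = weak_value_def seq_weak_value_def N P Q R
  note Phi = Phi_xk_Phi_kx_path_sums[OF sigma_pos kk]
  have xk: "(\<lambda>g. mean_prod (Phi_xk T ti t1 t2 tf psi_i psi_f A1 A2 \<sigma> g)
        - g\<^sup>2 / (4 * \<sigma>\<^sup>2) * Im (seq_weak_value T ti t1 t2 tf psi_i psi_f A2 A1
            - weak_value T ti tf psi_i psi_f A1 t1 * cnj (weak_value T ti tf psi_i psi_f A2 t2)))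
      \<in> O[at_right 0](\<lambda>g. g ^ 3)"
    using pointer_correlation_asymptotics[OF sigma_pos N0, of \<alpha> \<beta>] by (simp add: Phi weak_values)
  have kx: "(\<lambda>g. mean_prod (Phi_kx T ti t1 t2 tf psi_i psi_f A1 A2 \<sigma> g)
        - g\<^sup>2 / (4 * \<sigma>\<^sup>2) * Im (seq_weak_value T ti t1 t2 tf psi_i psi_f A2 A1
            + weak_value T ti tf psi_i psi_f A1 t1 * cnj (weak_value T ti tf psi_i psi_f A2 t2)))
      \<in> O[at_right 0](\<lambda>g. g ^ 3)"
    using pointer_correlation_asymptotics_swap[OF sigma_pos N0, of \<alpha> \<beta>] by (simp add: Phi weak_values)
  show ?thesis
    using sigma_pos by (intro conjI xk kx bigo_combination_over_square[OF xk kx]) simp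
qed

end
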